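(* Consider the Lasso problem of minimizing $\varphi(x):=\frac12\|Ax-b\|_2^2+\mu\|x\|_1$ over $x\in\mathbb{R}^n$, where $A\in\mathbb{R}^{m\times n}$, $b\in\mathbb{R}^m$, $\mu>0$, and suppose that $A^*A$ is positive-definite. Write $\varphi(x)=\frac12\langle\bar Ax,x\rangle+\langle\bar b,x\rangle+\bar\alpha+g(x)$ with $\bar A:=A^*A$, $\bar b:=-A^*b$, $\bar\alpha:=\frac12\|b\|^2$, $g(x):=\mu\|x\|_1$. Then: (i) the Generalized Damped Newton Algorithm for Quadratic Composite Optimization applied with data $(\bar A,\bar b,g)$ is well-defined, and its sequence of iterates $\{y^k\}$ globally converges at least Q-superlinearly to some $\bar y$; (ii) $\bar x:=Q\bar y+c$ is the unique solution of the Lasso problem and is a tilt-stable local minimizer of $\varphi$.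
   Context: Moreau envelope and proximal map of $g$ with $\gamma>0$: $e_\gamma g(x):=\inf_y\{g(y)+\frac1{2\gamma}\|y-x\|^2\}$, $\operatorname{Prox}_{\gamma g}(x):=\operatorname{argmin}_y\{g(y)+\frac1{2\gamma}\|y-x\|^2\}$. Generalized Damped Newton Algorithm for Quadratic Composite Optimization with data $(\bar A,\bar b,g)$: parameters $\sigma\in(0,\tfrac12)$, $\beta\in(0,1)$. Choose $\gamma>0$ with $I-\gamma\bar A$ positive-definite; set $Q:=(I-\gamma\bar A)^{-1}$, $c:=\gamma Q\bar b$, $P:=Q-I$, $\psi(y):=\frac12\langle Py,y\rangle+\langle c,y\rangle+\gamma e_\gamma g(y)$ (so $\nabla\psi(y)=Qy-\operatorname{Prox}_{\gamma g}(y)+c$). Choose $y^0$, $k=0$. If $\nabla\psi(y^k)=0$ stop; else set $v^k:=\operatorname{Prox}_{\gamma g}(y^k)$ and find $d^k$ with $\frac1\gamma(-\nabla\psi(y^k)-Pd^k)\in\partial^2g\big(v^k,\frac1\gamma(y^k-v^k)\big)(Qd^k+\nabla\psi(y^k))$; set $\tau_k=1$ and while $\psi(y^k+\tau_kd^k)>\psi(y^k)+\sigma\tau_k\langle\nabla\psi(y^k),d^k\rangle$ replace $\tau_k$ by $\beta\tau_k$; set $y^{k+1}:=y^k+\tau_kd^k$, increase $k$, repeat. Here $\partial^2g(x,y)(w):=\{z\mid(z,-w)\in N_{\operatorname{gph}\partial g}(x,y)\}$ with $N$ the limiting normal cone: $N_\Omega(\bar z)$ consists of $v$ such that $z_k\to\bar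 z$, $z_k\in\Omega$, $v_k\to v$, $v_k\in\widehat N_\Omega(z_k)$, with $\widehat N_\Omega(\bar z):=\{v\mid\limsup_{z\to\bar z,z\in\Omega}\langle v,z-\bar z\rangle/\|z-\bar z\|\le0\}$. Tilt stability: $\bar x$ is a tilt-stable local minimizer of $\varphi$ if for some $\gamma'>0$ the map $v\mapsto\operatorname{argmin}\{\varphi(x)-\langle v,x\rangle\mid x\in\mathbb{B}_{\gamma'}(\bar x)\}$ is single-valued and Lipschitz near $0$ with value $\{\bar x\}$ at $0$. Q-superlinear: $\|y^{k+1}-\bar y\|/\|y^k-\bar y\|\to0$. *)

theory Defs
  imports "HOL-Analysis.Analysis"
begin

text \<open>Regular (Frechet) normal cone: the limsup condition written out in epsilon-delta form.\<close>
definition regular_normal :: "'a::real_inner set \<Rightarrow> 'a \<Rightarrow> 'a set" where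
  "regular_normal \<Omega> zb = {v. \<forall>e>0. \<exists>d>0. \<forall>z\<in>\<Omega>. norm (z - zb) < d \<longrightarrow>
      v \<bullet> (z - zb) \<le> e * norm (z - zb)}"

definition limiting_normal :: "'a::real_inner set \<Rightarrow> 'a \<Rightarrow> 'a set" where
  "limiting_normal \<Omega> zb = {v. \<exists>zs vs. (\<forall>k. zs k \<in> \<Omega>) \<and> zs \<longlonglongrightarrow> zb \<and> vs \<longlonglongrightarrow> v \<and>
      (\<forall>k. vs k \<in> regular_normal \<Omega> (zs k))}"

definition regular_subdiff :: "('a::real_inner \<Rightarrow> real) \<Rightarrow> 'a \<Rightarrow> 'a set" where
  "regular_subdiff g x = {v. \<forall>e>0. \<exists>d>0. \<forall>u. norm (u - x) < d \<longrightarrow>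
      g u - g x - v \<bullet> (u - x) \<ge> - e * norm (u - x)}"

definition limiting_subdiff :: "('a::real_inner \<Rightarrow> real) \<Rightarrow> 'a \<Rightarrow> 'a set" where
  "limiting_subdiff g x = {v. \<exists>xs vs. xs \<longlonglongrightarrow> x \<and> (\<lambda>k. g (xs k)) \<longlonglongrightarrow> g x \<and>
      vs \<longlonglongrightarrow> v \<and> (\<forall>k. vs k \<in> regular_subdiff g (xs k))}"

definition subdiff_graph :: "('a::real_inner \<Rightarrow> real) \<Rightarrow> ('a \<times> 'a) set" where
  "subdiff_graph g = {(x, v). v \<in> limiting_subdiff g x}"

text \<open>Second-order subdifferential (coderivative of the subdifferential).\<close>
definition second_subdiff :: "('a::real_inner \<Rightarrow> real) \<Rightarrow> 'a \<Rightarrow> 'a \<Rightarrow> 'a \<Rightarrow> 'a set" where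
  "second_subdiff g x y w = {z. (z, - w) \<in> limiting_normal (subdiff_graph g) (x, y)}"

definition moreau_env :: "real \<Rightarrow> ('a::real_normed_vector \<Rightarrow> real) \<Rightarrow> 'a \<Rightarrow> real" where
  "moreau_env \<gamma> g x = (INF y. g y + (norm (y - x))\<^sup>2 / (2 * \<gamma>))"

definition prox :: "real \<Rightarrow> ('a::real_normed_vector \<Rightarrow> real) \<Rightarrow> 'a \<Rightarrow> 'a" where
  "prox \<gamma> g x = (THE y. \<forall>z. g y + (norm (y - x))\<^sup>2 / (2 * \<gamma>) \<le> g z + (norm (z - x))\<^sup>2 / (2 * \<gamma>))"

definition tilt_stable :: "('a::real_inner \<Rightarrow> real) \<Rightarrow> 'a \<Rightarrow> bool" where
  "tilt_stable \<phi> xb \<longleftrightarrow> (\<exists>\<gamma>'>0. \<exists>\<delta>>0. \<exists>L f.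
     (\<forall>v\<in>ball 0 \<delta>. {x \<in> cball xb \<gamma>'. \<forall>z\<in>cball xb \<gamma>'. \<phi> x - v \<bullet> x \<le> \<phi> z - v \<bullet> z} = {f v})
     \<and> L-lipschitz_on (ball 0 \<delta>) f \<and> f 0 = xb)"

definition q_superlinear :: "(nat \<Rightarrow> 'a::real_normed_vector) \<Rightarrow> 'a \<Rightarrow> bool" where
  "q_superlinear y yb \<longleftrightarrow> ((\<lambda>k. norm (y (Suc k) - yb) / norm (y k - yb)) \<longlonglongrightarrow> 0)"

definition pos_def :: "real^'n^'n \<Rightarrow> bool" where
  "pos_def M \<longleftrightarrow> (\<forall>x. x \<noteq> 0 \<longrightarrow> 0 < x \<bullet> (M *v x))"

definition gdna_Q :: "real^'n^'n \<Rightarrow> real \<Rightarrow> real^'n^'n" where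
  "gdna_Q Ab \<gamma> = matrix_inv (mat 1 - \<gamma> *\<^sub>R Ab)"

definition gdna_c :: "real^'n^'n \<Rightarrow> real^'n \<Rightarrow> real \<Rightarrow> real^'n" where
  "gdna_c Ab bb \<gamma> = \<gamma> *\<^sub>R (gdna_Q Ab \<gamma> *v bb)"

definition gdna_P :: "real^'n^'n \<Rightarrow> real \<Rightarrow> real^'n^'n" where
  "gdna_P Ab \<gamma> = gdna_Q Ab \<gamma> - mat 1"

definition gdna_psi :: "real^'n^'n \<Rightarrow> real^'n \<Rightarrow> (real^'n \<Rightarrow> real) \<Rightarrow> real \<Rightarrow> real^'n \<Rightarrow> real" where
  "gdna_psi Ab bb g \<gamma> y = 1/2 * ((gdna_P Ab \<gamma> *v y) \<bullet> y) + gdna_c Ab bb \<gamma> \<bullet> y + \<gamma> * moreau_env \<gamma> g y"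

definition gdna_grad :: "real^'n^'n \<Rightarrow> real^'n \<Rightarrow> (real^'n \<Rightarrow> real) \<Rightarrow> real \<Rightarrow> real^'n \<Rightarrow> real^'n" where
  "gdna_grad Ab bb g \<gamma> y = gdna_Q Ab \<gamma> *v y - prox \<gamma> g y + gdna_c Ab bb \<gamma>"

definition gdna_dir :: "real^'n^'n \<Rightarrow> real^'n \<Rightarrow> (real^'n \<Rightarrow> real) \<Rightarrow> real \<Rightarrow> real^'n \<Rightarrow> real^'n \<Rightarrow> bool" where
  "gdna_dir Ab bb g \<gamma> y d \<longleftrightarrow>
     (let v = prox \<gamma> g y; gr = gdna_grad Ab bb g \<gamma> y in
      (1/\<gamma>) *\<^sub>R (- gr - gdna_P Ab \<gamma> *v d)
        \<in> second_subdiff g v ((1/\<gamma>) *\<^sub>R (y - v)) (gdna_Q Ab \<gamma> *v d + gr))"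

definition gdna_armijo :: "real^'n^'n \<Rightarrow> real^'n \<Rightarrow> (real^'n \<Rightarrow> real) \<Rightarrow> real \<Rightarrow> real \<Rightarrow> real^'n \<Rightarrow> real^'n \<Rightarrow> real \<Rightarrow> bool" where
  "gdna_armijo Ab bb g \<gamma> \<sigma> y d \<tau> \<longleftrightarrow>
     gdna_psi Ab bb g \<gamma> (y + \<tau> *\<^sub>R d) \<le> gdna_psi Ab bb g \<gamma> y + \<sigma> * \<tau> * (gdna_grad Ab bb g \<gamma> y \<bullet> d)"

definition gdna_well_defined :: "real^'n^'n \<Rightarrow> real^'n \<Rightarrow> (real^'n \<Rightarrow> real) \<Rightarrow> real \<Rightarrow> real \<Rightarrow> real \<Rightarrow> bool" where
  "gdna_well_defined Ab bb g \<gamma> \<sigma> \<beta> \<longleftrightarrow>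
     (\<forall>y. gdna_grad Ab bb g \<gamma> y \<noteq> 0 \<longrightarrow>
        (\<exists>d. gdna_dir Ab bb g \<gamma> y d) \<and>
        (\<forall>d. gdna_dir Ab bb g \<gamma> y d \<longrightarrow> (\<exists>j::nat. gdna_armijo Ab bb g \<gamma> \<sigma> y d (\<beta> ^ j))))"

text \<open>A run of the algorithm (from arbitrary starting point y 0); after the stopping test
  succeeds the sequence is continued constantly.\<close>
definition gdna_run :: "real^'n^'n \<Rightarrow> real^'n \<Rightarrow> (real^'n \<Rightarrow> real) \<Rightarrow> real \<Rightarrow> real \<Rightarrow> real \<Rightarrow>
    (nat \<Rightarrow> real^'n) \<Rightarrow> (nat \<Rightarrow> real^'n) \<Rightarrow> bool" where
  "gdna_run Ab bb g \<gamma> \<sigma> \<beta> y d \<longleftrightarrow>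
     (\<forall>k. (gdna_grad Ab bb g \<gamma> (y k) = 0 \<longrightarrow> y (Suc k) = y k) \<and>
          (gdna_grad Ab bb g \<gamma> (y k) \<noteq> 0 \<longrightarrow>
             gdna_dir Ab bb g \<gamma> (y k) (d k) \<and>
             y (Suc k) = y k + (\<beta> ^ (LEAST j. gdna_armijo Ab bb g \<gamma> \<sigma> (y k) (d k) (\<beta> ^ j))) *\<^sub>R d k))"

definition l1norm :: "real^'n \<Rightarrow> real" where
  "l1norm x = (\<Sum>i\<in>UNIV. \<bar>x $ i\<bar>)"

definition lasso :: "real^'n^'m \<Rightarrow> real^'m \<Rightarrow> real \<Rightarrow> real^'n \<Rightarrow> real" where
  "lasso A b \<mu> x = 1/2 * (norm (A *v x - b))\<^sup>2 + \<mu> * l1norm x"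

definition lasso_Abar :: "real^'n^'m \<Rightarrow> real^'n^'n" where
  "lasso_Abar A = transpose A ** A"

definition lasso_bbar :: "real^'n^'m \<Rightarrow> real^'m \<Rightarrow> real^'n" where
  "lasso_bbar A b = - (transpose A *v b)"

definition lasso_g :: "real \<Rightarrow> real^'n \<Rightarrow> real" where
  "lasso_g \<mu> x = \<mu> * l1norm x"

end

(*
  For g = mu ||.||_1 the proximal map of gamma g is coordinatewise soft thresholding S with
  threshold theta = gamma mu, and gamma e_gamma g is a sum of Huber functions. Hence psi has the
  gradient F y = Q y - S y + c, which is strongly monotone (P is positive definite and I - S is
  monotone) and Lipschitz, and psi lies below its quadratic model with Hessian Q.

  The graph of the subdifferential of g is a product of one-dimensional graphs, so the Newton
  condition can be read off coordinatewise. A Newton direction exists (solve (P + D) d = - F y,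
  where D projects onto the coordinates with |y_i| < theta), and every Newton direction satisfies
  <F y, d> <= - <P d, d> and |F y| <= (1 + ||Q||) |d|. Hence backtracking stops at step sizes
  bounded away from 0, the sufficient decreases add up to F (y^k) -> 0, and strong monotonicity
  gives y^k -> yb with F yb = 0.

  Near yb every coordinate of y^k stays on one affine piece of S, where psi is quadratic: there
  the Newton step lands exactly on yb and, as sigma < 1/2, the unit step passes the Armijo test.
  So the iterates reach yb after finitely many steps.

  Finally xb = Q yb + c = S yb satisfies Abar xb + bbar + xi = 0 for the subgradient
  xi = (yb - xb) / gamma of g at xb, so xb minimizes phi. As A^T A is positive definite, phi is
  strongly convex, which makes the tilted minimizers on a ball unique and Lipschitz in the tilt.
*)

theory Submission
  imports Defs
begin

section \<open>Soft thresholding and the Huber function\<close>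

definition soft_threshold :: "real \<Rightarrow> real \<Rightarrow> real" where
  "soft_threshold \<theta> t = (if \<theta> < t then t - \<theta> else if t < -\<theta> then t + \<theta> else 0)"

definition huber :: "real \<Rightarrow> real \<Rightarrow> real" where
  "huber \<theta> t = \<theta> * \<bar>soft_threshold \<theta> t\<bar> + (soft_threshold \<theta> t - t)\<^sup>2 / 2"

(* in_abs_subdiff \<mu> s \<eta> means \<eta> \<in> \<partial>(\<mu> |.|)(s) *)
definition in_abs_subdiff :: "real \<Rightarrow> real \<Rightarrow> real \<Rightarrow> bool" where
  "in_abs_subdiff \<mu> s \<eta> \<longleftrightarrow> \<bar>\<eta>\<bar> \<le> \<mu> \<and> (0 < s \<longrightarrow> \<eta> = \<mu>) \<and> (s < 0 \<longrightarrow> \<eta> = -\<mu>)"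

lemma abs_subgradient_ineq:
  assumes "in_abs_subdiff \<mu> s \<eta>"
  shows "\<mu> * \<bar>s\<bar> + \<eta> * (r - s) \<le> \<mu> * \<bar>r\<bar>"
proof -
  have "\<eta> * r \<le> \<bar>\<eta>\<bar> * \<bar>r\<bar>"
    by (metis abs_ge_self abs_mult)
  also have "\<dots> \<le> \<mu> * \<bar>r\<bar>"
    using assms by (simp add: in_abs_subdiff_def mult_right_mono)
  moreover have "\<eta> * s = \<mu> * \<bar>s\<bar>"
    using assms by (cases "0 < s"; cases "s < 0") (auto simp: in_abs_subdiff_def)
  ultimately show ?thesis
    by (simp add: algebra_simps)
qed

lemma in_abs_subdiff_divide_iff:
  "0 < \<gamma> \<Longrightarrow> in_abs_subdiff \<mu> s (\<eta> / \<gamma>) \<longleftrightarrow> in_abs_subdiff (\<gamma> * \<mu>) s \<eta>"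
  by (auto simp: in_abs_subdiff_def abs_divide field_simps)

lemma in_abs_subdiff_soft_threshold:
  assumes "0 \<le> \<theta>" "0 \<le> \<tau>"
  shows "in_abs_subdiff \<theta> (soft_threshold \<theta> t + (if \<bar>t\<bar> = \<theta> then \<tau> * t else 0))
    (t - soft_threshold \<theta> t)"
  using assms
  by (auto simp: in_abs_subdiff_def soft_threshold_def zero_less_mult_iff mult_less_0_iff)

lemma soft_threshold_perturbed_nonzero:
  "0 < \<theta> \<Longrightarrow> 0 < \<tau> \<Longrightarrow> \<theta> \<le> \<bar>t\<bar> \<Longrightarrow> soft_threshold \<theta> t + (if \<bar>t\<bar> = \<theta> then \<tau> * t else 0) \<noteq> 0"
  by (auto simp: soft_threshold_def)

lemma soft_threshold_nonzero_iff: "0 \<le> \<theta> \<Longrightarrow> soft_threshold \<theta> t \<noteq> 0 \<longleftrightarrow> \<theta> < \<bar>t\<bar>"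
  by (auto simp: soft_threshold_def)

lemma abs_soft_threshold_residual_less_iff:
  "0 < \<theta> \<Longrightarrow> \<bar>t - soft_threshold \<theta> t\<bar> < \<theta> \<longleftrightarrow> \<bar>t\<bar> < \<theta>"
  by (auto simp: soft_threshold_def)

lemma abs_soft_threshold_diff_le:
  "0 \<le> \<theta> \<Longrightarrow> \<bar>soft_threshold \<theta> s - soft_threshold \<theta> t\<bar> \<le> \<bar>s - t\<bar>"
  by (auto simp: soft_threshold_def)

lemma soft_threshold_residual_monotone:
  assumes "0 \<le> \<theta>"
  shows "0 \<le> (s - soft_threshold \<theta> s - (t - soft_threshold \<theta> t)) * (s - t)"
proof -
  let ?d = "soft_threshold \<theta> s - soft_threshold \<theta> t"
  have "?d * (s - t) \<le> \<bar>?d\<bar> * \<bar>s - t\<bar>"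
    by (metis abs_ge_self abs_mult)
  also have "\<dots> \<le> \<bar>s - t\<bar> * \<bar>s - t\<bar>"
    by (rule mult_right_mono[OF abs_soft_threshold_diff_le[OF assms]]) simp
  finally show ?thesis
    by (simp add: abs_mult_self_eq algebra_simps)
qed

lemma huber_nonneg: "0 \<le> \<theta> \<Longrightarrow> 0 \<le> huber \<theta> t"
  by (simp add: huber_def)

lemma huber_plus_sq_dist_le:
  assumes "0 \<le> \<theta>"
  shows "huber \<theta> t + (z - soft_threshold \<theta> t)\<^sup>2 / 2 \<le> \<theta> * \<bar>z\<bar> + (z - t)\<^sup>2 / 2"
proof -
  let ?s = "soft_threshold \<theta> t"
  have "in_abs_subdiff \<theta> ?s (t - ?s)"
    using in_abs_subdiff_soft_threshold[OF assms order_refl, of t]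
    by (simp only: mult_zero_left if_cancel add_0_right)
  then have "\<theta> * \<bar>?s\<bar> + (t - ?s) * (z - ?s) \<le> \<theta> * \<bar>z\<bar>"
    by (rule abs_subgradient_ineq)
  moreover have "(z - t)\<^sup>2 = (?s - t)\<^sup>2 + (z - ?s)\<^sup>2 - 2 * ((t - ?s) * (z - ?s))"
    by (simp add: power2_eq_square algebra_simps)
  ultimately show ?thesis
    unfolding huber_def by linarith
qed

lemma huber_le_quadratic_model:
  assumes "0 \<le> \<theta>"
  shows "huber \<theta> (t + w) \<le> huber \<theta> t + (t - soft_threshold \<theta> t) * w + w\<^sup>2 / 2"
proof -
  let ?s = "soft_threshold \<theta> t"
  have "huber \<theta> (t + w) \<le> \<theta> * \<bar>?s\<bar> + (?s - (t + w))\<^sup>2 / 2"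
    using huber_plus_sq_dist_le[OF assms, of "t + w" ?s]
      zero_le_power2[of "?s - soft_threshold \<theta> (t + w)"] by linarith
  also have "\<dots> = huber \<theta> t + (t - ?s) * w + w\<^sup>2 / 2"
    by (simp add: huber_def power2_eq_square field_simps)
  finally show ?thesis .
qed

(* t lies in the interior, and s in the closure, of an interval on which soft_threshold \<theta>
   is affine *)
definition same_soft_piece :: "real \<Rightarrow> real \<Rightarrow> real \<Rightarrow> bool" where
  "same_soft_piece \<theta> t s \<longleftrightarrow>
     (\<theta> < t \<and> \<theta> \<le> s) \<or> (t < -\<theta> \<and> s \<le> -\<theta>) \<or> (\<bar>t\<bar> < \<theta> \<and> \<bar>s\<bar> \<le> \<theta>) \<or> t = s"

lemma eventually_same_soft_piece:
  assumes "0 < \<theta>"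
  shows "eventually (\<lambda>t. same_soft_piece \<theta> t s) (nhds s)"
  unfolding eventually_nhds_metric
proof (intro exI conjI allI impI)
  let ?r = "if \<bar>s\<bar> = \<theta> then \<theta> else \<bar>\<bar>s\<bar> - \<theta>\<bar>"
  show "0 < ?r"
    using assms by auto
  show "same_soft_piece \<theta> t s" if "dist t s < ?r" for t
    using that assms unfolding same_soft_piece_def dist_real_def by (auto split: if_splits)
qed

lemma soft_threshold_diff_same_piece:
  "0 < \<theta> \<Longrightarrow> same_soft_piece \<theta> t s \<Longrightarrow>
     (soft_threshold \<theta> t - soft_threshold \<theta> s = t - s \<and> \<theta> < \<bar>t\<bar>) \<or>
     (soft_threshold \<theta> t - soft_threshold \<theta> s = 0 \<and> \<bar>t\<bar> < \<theta>) \<or> t = s"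
  by (auto simp: soft_threshold_def same_soft_piece_def)

lemma huber_eq:
  "0 < \<theta> \<Longrightarrow> huber \<theta> t =
    (if \<theta> < t then \<theta> * t - \<theta>\<^sup>2 / 2 else if t < -\<theta> then - \<theta> * t - \<theta>\<^sup>2 / 2 else t\<^sup>2 / 2)"
  by (auto simp: huber_def soft_threshold_def power2_eq_square field_simps)

lemma huber_diff_same_piece:
  assumes "0 < \<theta>" "same_soft_piece \<theta> t s"
  shows "huber \<theta> t - huber \<theta> s =
    ((t - soft_threshold \<theta> t) + (s - soft_threshold \<theta> s)) * (t - s) / 2"
  using assms unfolding huber_eq[OF assms(1)] soft_threshold_def same_soft_piece_def
  by (cases "\<theta> < t"; cases "t < -\<theta>"; cases "\<theta> < s"; cases "s < -\<theta>")
    (simp_all add: power2_eq_square field_simps)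

section \<open>Proximal map and Moreau envelope of the l1 norm\<close>

lemma inner_vec_eq_sum: "(x::real^'n) \<bullet> y = (\<Sum>i\<in>UNIV. x$i * y$i)"
  by (simp add: inner_vec_def)

lemma norm_sq_vec_eq_sum: "(norm (x::real^'n))\<^sup>2 = (\<Sum>i\<in>UNIV. (x$i)\<^sup>2)"
  unfolding power2_norm_eq_inner inner_vec_eq_sum by (simp add: power2_eq_square)

lemma lasso_g_eq_sum: "lasso_g \<mu> x = (\<Sum>i\<in>UNIV. \<mu> * \<bar>x$i\<bar>)"
  by (simp add: lasso_g_def l1norm_def sum_distrib_left)

definition soft_threshold_vec :: "real \<Rightarrow> real^'n \<Rightarrow> real^'n" where
  "soft_threshold_vec \<theta> y = (\<chi> i. soft_threshold \<theta> (y$i))"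

lemma soft_threshold_vec_nth [simp]: "soft_threshold_vec \<theta> y $ i = soft_threshold \<theta> (y$i)"
  by (simp add: soft_threshold_vec_def)

lemma lasso_g_prox_objective_growth:
  assumes "0 < \<mu>" "0 < \<gamma>"
  shows "(\<Sum>i\<in>UNIV. huber (\<gamma> * \<mu>) (y$i)) / \<gamma> + (norm (z - soft_threshold_vec (\<gamma> * \<mu>) y))\<^sup>2 / (2 * \<gamma>)
    \<le> lasso_g \<mu> z + (norm (z - y))\<^sup>2 / (2 * \<gamma>)"
proof -
  let ?s = "soft_threshold_vec (\<gamma> * \<mu>) y"
  have "(\<Sum>i\<in>UNIV. huber (\<gamma> * \<mu>) (y$i) + (z$i - ?s$i)\<^sup>2 / 2) / \<gamma>
      \<le> (\<Sum>i\<in>UNIV. \<gamma> * \<mu> * \<bar>z$i\<bar> + (z$i - y$i)\<^sup>2 / 2) / \<gamma>"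
    using assms by (intro divide_right_mono sum_mono) (simp_all add: huber_plus_sq_dist_le)
  moreover have "(\<Sum>i\<in>UNIV. huber (\<gamma> * \<mu>) (y$i) + (z$i - ?s$i)\<^sup>2 / 2) / \<gamma>
      = (\<Sum>i\<in>UNIV. huber (\<gamma> * \<mu>) (y$i)) / \<gamma> + (norm (z - ?s))\<^sup>2 / (2 * \<gamma>)"
    by (simp add: norm_sq_vec_eq_sum sum.distrib add_divide_distrib flip: sum_divide_distrib)
  moreover have "(\<Sum>i\<in>UNIV. \<gamma> * \<mu> * \<bar>z$i\<bar> + (z$i - y$i)\<^sup>2 / 2) / \<gamma>
      = lasso_g \<mu> z + (norm (z - y))\<^sup>2 / (2 * \<gamma>)"
    using assms by (simp add: lasso_g_eq_sum norm_sq_vec_eq_sum sum.distrib add_divide_distrib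
        mult.assoc flip: sum_distrib_left sum_divide_distrib)
  ultimately show ?thesis
    by simp
qed

lemma lasso_g_prox_objective_soft_threshold:
  assumes "0 < \<gamma>"
  shows "lasso_g \<mu> (soft_threshold_vec (\<gamma> * \<mu>) y)
      + (norm (soft_threshold_vec (\<gamma> * \<mu>) y - y))\<^sup>2 / (2 * \<gamma>)
    = (\<Sum>i\<in>UNIV. huber (\<gamma> * \<mu>) (y$i)) / \<gamma>"
  using assms
  by (simp add: lasso_g_eq_sum norm_sq_vec_eq_sum huber_def sum.distrib sum_distrib_left
      field_simps flip: sum_divide_distrib)

lemma lasso_g_prox_objective_lower_bound:
  assumes "0 < \<mu>" "0 < \<gamma>"
  shows "(\<Sum>i\<in>UNIV. huber (\<gamma> * \<mu>) (y$i)) / \<gamma> \<le> lasso_g \<mu> z + (norm (z - y))\<^sup>2 / (2 * \<gamma>)"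
proof -
  have "0 \<le> (norm (z - soft_threshold_vec (\<gamma> * \<mu>) y))\<^sup>2 / (2 * \<gamma>)"
    using assms by simp
  then show ?thesis
    using lasso_g_prox_objective_growth[OF assms, of y z] by linarith
qed

lemma prox_lasso_g:
  assumes "0 < \<mu>" "0 < \<gamma>"
  shows "prox \<gamma> (lasso_g \<mu>) y = soft_threshold_vec (\<gamma> * \<mu>) y"
  unfolding prox_def
proof (rule the_equality)
  show "\<forall>z. lasso_g \<mu> (soft_threshold_vec (\<gamma> * \<mu>) y)
      + (norm (soft_threshold_vec (\<gamma> * \<mu>) y - y))\<^sup>2 / (2 * \<gamma>)
      \<le> lasso_g \<mu> z + (norm (z - y))\<^sup>2 / (2 * \<gamma>)"
    by (simp add: lasso_g_prox_objective_soft_threshold[OF assms(2)]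
        lasso_g_prox_objective_lower_bound[OF assms])
next
  fix x
  assume "\<forall>z. lasso_g \<mu> x + (norm (x - y))\<^sup>2 / (2 * \<gamma>) \<le> lasso_g \<mu> z + (norm (z - y))\<^sup>2 / (2 * \<gamma>)"
  then have "lasso_g \<mu> x + (norm (x - y))\<^sup>2 / (2 * \<gamma>) \<le> (\<Sum>i\<in>UNIV. huber (\<gamma> * \<mu>) (y$i)) / \<gamma>"
    by (metis lasso_g_prox_objective_soft_threshold[OF assms(2)])
  then have "(norm (x - soft_threshold_vec (\<gamma> * \<mu>) y))\<^sup>2 / (2 * \<gamma>) \<le> 0"
    using lasso_g_prox_objective_growth[OF assms, of y x] by linarith
  then show "x = soft_threshold_vec (\<gamma> * \<mu>) y"
    using assms by (simp add: divide_le_0_iff)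
qed

lemma moreau_env_lasso_g:
  assumes "0 < \<mu>" "0 < \<gamma>"
  shows "\<gamma> * moreau_env \<gamma> (lasso_g \<mu>) y = (\<Sum>i\<in>UNIV. huber (\<gamma> * \<mu>) (y$i))"
proof -
  have "moreau_env \<gamma> (lasso_g \<mu>) y = (\<Sum>i\<in>UNIV. huber (\<gamma> * \<mu>) (y$i)) / \<gamma>"
    unfolding moreau_env_def
  proof (rule cInf_eq_minimum)
    show "(\<Sum>i\<in>UNIV. huber (\<gamma> * \<mu>) (y$i)) / \<gamma> \<in> range (\<lambda>z. lasso_g \<mu> z + (norm (z - y))\<^sup>2 / (2 * \<gamma>))"
      by (rule range_eqI[where x = "soft_threshold_vec (\<gamma> * \<mu>) y"])
        (simp add: lasso_g_prox_objective_soft_threshold[OF assms(2)])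
  qed (auto intro: lasso_g_prox_objective_lower_bound[OF assms])
  then show ?thesis
    using assms by simp
qed

section \<open>Directional tests for regular subgradients and normals\<close>

lemma small_step_exists:
  fixes t0 d c :: real
  assumes "0 < t0" "0 < d" "0 < c"
  shows "\<exists>t. 0 < t \<and> t < t0 \<and> t * c < d"
proof -
  define t where "t = min (t0 / 2) (d / (2 * c))"
  have "t * c \<le> d / (2 * c) * c"
    using assms by (intro mult_right_mono) (auto simp: t_def)
  then show ?thesis
    using assms by (intro exI[of _ t]) (auto simp: t_def)
qed

lemma le_if_le_add_mult_all_pos:
  fixes a c k :: real
  assumes "0 \<le> k" and le: "\<And>e. 0 < e \<Longrightarrow> a \<le> c + e * k"
  shows "a \<le> c"
proof (rule field_le_epsilon)
  fix e :: real
  assume "0 < e"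
  then have "a \<le> c + e / (k + 1) * k"
    using assms(1) by (intro le) (simp add: add_nonneg_pos)
  moreover have "e / (k + 1) * k \<le> e"
    using assms(1) \<open>0 < e\<close> by (simp add: field_simps)
  ultimately show "a \<le> c + e"
    by linarith
qed

lemma regular_subdiff_directional:
  fixes g :: "'a::real_inner \<Rightarrow> real"
  assumes v: "v \<in> regular_subdiff g x" and "0 < t0"
    and incr: "\<And>t. 0 < t \<Longrightarrow> t < t0 \<Longrightarrow> g (x + t *\<^sub>R w) - g x \<le> t * c"
  shows "v \<bullet> w \<le> c"
proof (rule le_if_le_add_mult_all_pos)
  fix e :: real
  assume "0 < e"
  with v obtain d where "0 < d"
    and d: "\<And>u. norm (u - x) < d \<Longrightarrow> - e * norm (u - x) \<le> g u - g x - v \<bullet> (u - x)"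
    unfolding regular_subdiff_def by blast
  obtain t where t: "0 < t" "t < t0" "t * (norm w + 1) < d"
    using small_step_exists[OF \<open>0 < t0\<close> \<open>0 < d\<close>, of "norm w + 1"] norm_ge_zero[of w] by auto
  then have "t * (v \<bullet> w) \<le> t * (c + e * norm w)"
    using d[of "x + t *\<^sub>R w"] incr[OF t(1,2)] by (simp add: algebra_simps)
  then show "v \<bullet> w \<le> c + e * norm w"
    using t(1) by simp
qed simp

lemma regular_normal_directional:
  fixes \<Omega> :: "'a::real_inner set"
  assumes v: "v \<in> regular_normal \<Omega> z" and "0 < t0"
    and feasible: "\<And>t. 0 < t \<Longrightarrow> t < t0 \<Longrightarrow> z + t *\<^sub>R w \<in> \<Omega>"
  shows "v \<bullet> w \<le> 0"
proof (rule le_if_le_add_mult_all_pos)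
  fix e :: real
  assume "0 < e"
  with v obtain d where "0 < d"
    and d: "\<And>u. u \<in> \<Omega> \<Longrightarrow> norm (u - z) < d \<Longrightarrow> v \<bullet> (u - z) \<le> e * norm (u - z)"
    unfolding regular_normal_def by blast
  obtain t where t: "0 < t" "t < t0" "t * (norm w + 1) < d"
    using small_step_exists[OF \<open>0 < t0\<close> \<open>0 < d\<close>, of "norm w + 1"] norm_ge_zero[of w] by auto
  then have "t * (v \<bullet> w) \<le> t * (0 + e * norm w)"
    using d[OF feasible[OF t(1,2)]] by (simp add: algebra_simps)
  then show "v \<bullet> w \<le> 0 + e * norm w"
    using t(1) by simp
qed simp

section \<open>Subdifferential of the l1 norm and normals to its graph\<close>

definition l1_graph :: "real \<Rightarrow> ((real^'n) \<times> (real^'n)) set" where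
  "l1_graph \<mu> = {(x, \<xi>). \<forall>i. in_abs_subdiff \<mu> (x$i) (\<xi>$i)}"

lemma lasso_g_subgradient_ineq:
  assumes "(x, \<xi>) \<in> l1_graph \<mu>"
  shows "lasso_g \<mu> x + \<xi> \<bullet> (u - x) \<le> lasso_g \<mu> u"
proof -
  have "(\<Sum>i\<in>UNIV. \<mu> * \<bar>x$i\<bar> + \<xi>$i * (u$i - x$i)) \<le> (\<Sum>i\<in>UNIV. \<mu> * \<bar>u$i\<bar>)"
    using assms by (intro sum_mono abs_subgradient_ineq) (simp add: l1_graph_def)
  then show ?thesis
    by (simp add: lasso_g_eq_sum inner_vec_eq_sum sum.distrib)
qed

lemma lasso_g_add_axis:
  "lasso_g \<mu> (x + t *\<^sub>R axis i s) = lasso_g \<mu> x + (\<mu> * \<bar>x$i + t * s\<bar> - \<mu> * \<bar>x$i\<bar>)"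
proof -
  have "(\<Sum>j\<in>UNIV. \<mu> * \<bar>(x + t *\<^sub>R axis i s)$j\<bar>)
      = (\<Sum>j\<in>UNIV. \<mu> * \<bar>x$j\<bar> + (if j = i then \<mu> * \<bar>x$i + t * s\<bar> - \<mu> * \<bar>x$i\<bar> else 0))"
    by (intro sum.cong) (auto simp: axis_def)
  then show ?thesis
    by (simp add: lasso_g_eq_sum sum.distrib)
qed

lemma regular_subdiff_lasso_g_iff:
  assumes "0 < \<mu>"
  shows "v \<in> regular_subdiff (lasso_g \<mu>) x \<longleftrightarrow> (x, v) \<in> l1_graph \<mu>"
proof
  assume v: "v \<in> regular_subdiff (lasso_g \<mu>) x"
  have coord: "v$i * s \<le> c"
    if "0 < r" "\<And>t. 0 < t \<Longrightarrow> t < r \<Longrightarrow> \<mu> * \<bar>x$i + t * s\<bar> - \<mu> * \<bar>x$i\<bar> \<le> t * c" for i s c r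
    using regular_subdiff_directional[OF v, of r "axis i s" c] that
    by (simp add: lasso_g_add_axis inner_axis)
  have "in_abs_subdiff \<mu> (x$i) (v$i)" for i
  proof -
    have "\<mu> * \<bar>x$i + t * s\<bar> - \<mu> * \<bar>x$i\<bar> \<le> t * \<mu>" if "0 < t" "\<bar>s\<bar> = 1" for t s
      using abs_triangle_ineq[of "x$i" "t * s"] that assms
      by (simp add: abs_mult mult_left_mono flip: right_diff_distrib)
    then have bounded: "v$i * s \<le> \<mu>" if "\<bar>s\<bar> = 1" for s
      using that by (intro coord[OF zero_less_one]) auto
    have "v$i * 1 \<le> \<mu>" "v$i * (-1) \<le> \<mu>"
      using bounded[where s = 1] bounded[where s = "-1"] by simp_all
    moreover have "v$i * (-1) \<le> -\<mu>" if "0 < x$i"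
      using coord[OF that, where s = "-1" and c = "-\<mu>"] that by (simp add: algebra_simps)
    moreover have "v$i * 1 \<le> -\<mu>" if "x$i < 0"
      using coord[where r = "- x$i" and s = 1 and c = "-\<mu>"] that by (simp add: algebra_simps)
    ultimately show ?thesis
      by (auto simp: in_abs_subdiff_def)
  qed
  then show "(x, v) \<in> l1_graph \<mu>"
    by (simp add: l1_graph_def)
next
  assume "(x, v) \<in> l1_graph \<mu>"
  then have "0 \<le> lasso_g \<mu> u - lasso_g \<mu> x - v \<bullet> (u - x)" for u
    using lasso_g_subgradient_ineq[of x v \<mu> u] by simp
  moreover have "- e * norm (u - x) \<le> 0" if "0 < e" for e u
    using that by simp
  ultimately show "v \<in> regular_subdiff (lasso_g \<mu>) x"
    unfolding regular_subdiff_def by (blast intro: order_trans zero_less_one)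
qed

lemma closed_l1_graph: "closed (l1_graph \<mu>)"
proof -
  have "l1_graph \<mu> = (\<Inter>i. {p. \<bar>snd p $ i\<bar> \<le> \<mu>} \<inter> ({p. fst p $ i \<le> 0} \<union> {p. snd p $ i = \<mu>})
      \<inter> ({p. 0 \<le> fst p $ i} \<union> {p. snd p $ i = -\<mu>}))"
    by (auto simp: l1_graph_def in_abs_subdiff_def not_less[symmetric])
  also have "closed \<dots>"
    by (intro closed_INT closed_Int closed_Un closed_Collect_le closed_Collect_eq ballI
        continuous_intros)
  finally show ?thesis .
qed

lemma subdiff_graph_lasso_g:
  assumes "0 < \<mu>"
  shows "subdiff_graph (lasso_g \<mu>) = l1_graph \<mu>"
proof (intro set_eqI iffI)
  fix p
  assume "p \<in> subdiff_graph (lasso_g \<mu>)"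
  then obtain x v xs vs where p: "p = (x, v)" and "xs \<longlonglongrightarrow> x" "vs \<longlonglongrightarrow> v"
    and "\<And>k. vs k \<in> regular_subdiff (lasso_g \<mu>) (xs k)"
    unfolding subdiff_graph_def limiting_subdiff_def by blast
  then show "p \<in> l1_graph \<mu>"
    using closed_sequentially[OF closed_l1_graph, of "\<lambda>k. (xs k, vs k)"]
    by (simp add: regular_subdiff_lasso_g_iff[OF assms] tendsto_Pair)
next
  fix p
  assume "p \<in> l1_graph \<mu>"
  then show "p \<in> subdiff_graph (lasso_g \<mu>)"
    unfolding subdiff_graph_def limiting_subdiff_def
    by (cases p) (auto simp: regular_subdiff_lasso_g_iff[OF assms] intro!: exI[of _ "\<lambda>k. _"])
qed

lemma l1_graph_add_axis:
  assumes "(x, \<xi>) \<in> l1_graph \<mu>" "in_abs_subdiff \<mu> (x$i + t * p) (\<xi>$i + t * q)"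
  shows "(x, \<xi>) + t *\<^sub>R (axis i p, axis i q) \<in> l1_graph \<mu>"
  using assms by (auto simp: l1_graph_def axis_def)

lemma regular_normal_l1_graph_test:
  assumes "(x, \<xi>) \<in> l1_graph \<mu>" "(a, b) \<in> regular_normal (l1_graph \<mu>) (x, \<xi>)" "0 < r"
    and "\<And>t. 0 < t \<Longrightarrow> t < r \<Longrightarrow> in_abs_subdiff \<mu> (x$i + t * p) (\<xi>$i + t * q)"
  shows "a$i * p + b$i * q \<le> 0"
  using regular_normal_directional[OF assms(2,3), of "(axis i p, axis i q)"]
    l1_graph_add_axis[OF assms(1)] assms(4)
  by (simp add: inner_axis)

lemma regular_normal_l1_graph_kink:
  assumes "0 < \<mu>" "(x, \<xi>) \<in> l1_graph \<mu>" "(a, b) \<in> regular_normal (l1_graph \<mu>) (x, \<xi>)"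
    and "x$i = 0" "\<bar>\<xi>$i\<bar> = \<mu>"
  shows "a$i * b$i \<le> 0"
proof -
  note test = regular_normal_l1_graph_test[OF assms(2,3)]
  consider "\<xi>$i = \<mu>" | "\<xi>$i = -\<mu>"
    using assms(5) by linarith
  then show ?thesis
  proof cases
    case 1
    have "a$i * 1 + b$i * 0 \<le> 0" "a$i * 0 + b$i * (-1) \<le> 0"
      using assms(1,4) 1
      by (intro test[where r = 1] test[where r = "2 * \<mu>"]; auto simp: in_abs_subdiff_def)+
    then show ?thesis
      by (simp add: mult_nonpos_nonneg)
  next
    case 2
    have "a$i * (-1) + b$i * 0 \<le> 0" "a$i * 0 + b$i * 1 \<le> 0"
      using assms(1,4) 2
      by (intro test[where r = 1] test[where r = "2 * \<mu>"]; auto simp: in_abs_subdiff_def)+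
    then show ?thesis
      by (simp add: mult_nonneg_nonpos)
  qed
qed

lemma regular_normal_l1_graph_imp:
  assumes "0 < \<mu>" "(x, \<xi>) \<in> l1_graph \<mu>" "(a, b) \<in> regular_normal (l1_graph \<mu>) (x, \<xi>)"
  shows "(x$i \<noteq> 0 \<longrightarrow> a$i = 0) \<and> (\<bar>\<xi>$i\<bar> < \<mu> \<longrightarrow> b$i = 0) \<and> a$i * b$i \<le> 0"
proof -
  note test = regular_normal_l1_graph_test[OF assms(2,3)]
  have xi: "in_abs_subdiff \<mu> (x$i) (\<xi>$i)"
    using assms(2) by (simp add: l1_graph_def)
  have a0: "a$i = 0" if "x$i \<noteq> 0"
  proof -
    have "a$i * 1 + b$i * 0 \<le> 0" "a$i * (-1) + b$i * 0 \<le> 0"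
      using \<open>x$i \<noteq> 0\<close> xi
      by (intro test[where r = "\<bar>x$i\<bar>"]; auto simp: in_abs_subdiff_def)+
    then show ?thesis
      by simp
  qed
  have b0: "b$i = 0" if "\<bar>\<xi>$i\<bar> < \<mu>"
  proof -
    have "x$i = 0"
      using xi that by (auto simp: in_abs_subdiff_def)
    then have "a$i * 0 + b$i * 1 \<le> 0" "a$i * 0 + b$i * (-1) \<le> 0"
      using \<open>\<bar>\<xi>$i\<bar> < \<mu>\<close>
      by (intro test[where r = "\<mu> - \<bar>\<xi>$i\<bar>"]; auto simp: in_abs_subdiff_def)+
    then show ?thesis
      by simp
  qed
  have "a$i * b$i \<le> 0"
  proof (cases "x$i = 0 \<and> \<bar>\<xi>$i\<bar> = \<mu>")
    case True
    then show ?thesis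
      using regular_normal_l1_graph_kink[OF assms] by blast
  next
    case False
    then have "x$i \<noteq> 0 \<or> \<bar>\<xi>$i\<bar> < \<mu>"
      using xi by (auto simp: in_abs_subdiff_def)
    then show ?thesis
      using a0 b0 by auto
  qed
  then show ?thesis
    using a0 b0 by blast
qed

lemma limiting_normal_l1_graph_imp:
  fixes x \<xi> a b :: "real^'n"
  assumes "0 < \<mu>" "(a, b) \<in> limiting_normal (l1_graph \<mu>) (x, \<xi>)"
  shows "(x$i \<noteq> 0 \<longrightarrow> a$i = 0) \<and> (\<bar>\<xi>$i\<bar> < \<mu> \<longrightarrow> b$i = 0) \<and> a$i * b$i \<le> 0"
proof -
  let ?C = "{p :: ((real^'n) \<times> (real^'n)) \<times> ((real^'n) \<times> (real^'n)).
    (fst (fst p) $ i = 0 \<or> fst (snd p) $ i = 0) \<and> (\<mu> \<le> \<bar>snd (fst p) $ i\<bar> \<or> snd (snd p) $ i = 0)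
    \<and> fst (snd p) $ i * snd (snd p) $ i \<le> 0}"
  have "closed ?C"
    by (intro closed_Collect_conj closed_Collect_disj closed_Collect_eq closed_Collect_le
        continuous_intros)
  obtain zs vs where zs: "\<And>k. zs k \<in> l1_graph \<mu>" "zs \<longlonglongrightarrow> (x, \<xi>)"
    and vs: "\<And>k. vs k \<in> regular_normal (l1_graph \<mu>) (zs k)" "vs \<longlonglongrightarrow> (a, b)"
    using assms(2) unfolding limiting_normal_def by blast
  have "(zs k, vs k) \<in> ?C" for k
    using regular_normal_l1_graph_imp[OF assms(1), of "fst (zs k)" "snd (zs k)" "fst (vs k)"
        "snd (vs k)" i] zs(1)[of k] vs(1)[of k]
    by auto
  moreover have "(\<lambda>k. (zs k, vs k)) \<longlonglongrightarrow> ((x, \<xi>), (a, b))"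
    using zs(2) vs(2) by (rule tendsto_Pair)
  ultimately have "((x, \<xi>), (a, b)) \<in> ?C"
    by (rule closed_sequentially[OF \<open>closed ?C\<close>])
  then show ?thesis
    by auto
qed

lemma abs_subdiff_locally_flat:
  assumes "in_abs_subdiff \<mu> s \<eta>" "(s \<noteq> 0 \<and> \<alpha> = 0) \<or> (\<bar>\<eta>\<bar> < \<mu> \<and> \<beta> = 0)"
  shows "\<exists>r>0. \<forall>s' \<eta>'. in_abs_subdiff \<mu> s' \<eta>' \<longrightarrow> \<bar>s' - s\<bar> < r \<longrightarrow> \<bar>\<eta>' - \<eta>\<bar> < r \<longrightarrow>
    \<alpha> * (s' - s) + \<beta> * (\<eta>' - \<eta>) = 0"
  using assms
  by (intro exI[of _ "if s \<noteq> 0 then \<bar>s\<bar> else \<mu> - \<bar>\<eta>\<bar>"]) (auto simp: in_abs_subdiff_def)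

lemma regular_normal_l1_graph_if:
  assumes "(x, \<xi>) \<in> l1_graph \<mu>" and flat: "\<And>i. (x$i \<noteq> 0 \<and> a$i = 0) \<or> (\<bar>\<xi>$i\<bar> < \<mu> \<and> b$i = 0)"
  shows "(a, b) \<in> regular_normal (l1_graph \<mu>) (x, \<xi>)"
proof -
  have "\<forall>i. \<exists>r>0. \<forall>s' \<eta>'. in_abs_subdiff \<mu> s' \<eta>' \<longrightarrow> \<bar>s' - x$i\<bar> < r \<longrightarrow> \<bar>\<eta>' - \<xi>$i\<bar> < r \<longrightarrow>
      a$i * (s' - x$i) + b$i * (\<eta>' - \<xi>$i) = 0"
    using assms by (auto simp: l1_graph_def intro!: abs_subdiff_locally_flat)
  then obtain r where r_pos: "\<And>i. 0 < r i" and r: "\<And>i s' \<eta>'. in_abs_subdiff \<mu> s' \<eta>' \<Longrightarrow>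
      \<bar>s' - x$i\<bar> < r i \<Longrightarrow> \<bar>\<eta>' - \<xi>$i\<bar> < r i \<Longrightarrow> a$i * (s' - x$i) + b$i * (\<eta>' - \<xi>$i) = 0"
    by metis
  define d where "d = Min (range r)"
  have "0 < d"
    using r_pos by (simp add: d_def)
  have "(a, b) \<bullet> (z - (x, \<xi>)) = 0" if "z \<in> l1_graph \<mu>" "norm (z - (x, \<xi>)) < d" for z
  proof -
    obtain x' \<xi>' where z: "z = (x', \<xi>')"
      by fastforce
    have "a$i * (x'$i - x$i) + b$i * (\<xi>'$i - \<xi>$i) = 0" for i
    proof (rule r)
      show "in_abs_subdiff \<mu> (x'$i) (\<xi>'$i)"
        using that(1) z by (simp add: l1_graph_def)
      have "d \<le> r i"
        by (simp add: d_def)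
      then show "\<bar>x'$i - x$i\<bar> < r i" "\<bar>\<xi>'$i - \<xi>$i\<bar> < r i"
        using that(2) z component_le_norm_cart[of "x' - x" i] component_le_norm_cart[of "\<xi>' - \<xi>" i]
          norm_fst_le[of "x' - x" "\<xi>' - \<xi>"] norm_snd_le[of "\<xi>' - \<xi>" "x' - x"]
        by auto
    qed
    then show ?thesis
      using z by (simp add: inner_vec_eq_sum flip: sum.distrib)
  qed
  then show ?thesis
    unfolding regular_normal_def using \<open>0 < d\<close> by (auto intro!: exI[of _ d])
qed

section \<open>Linear algebra\<close>

lemma matrix_inv_cancel:
  fixes M :: "real^'n^'n"
  assumes "invertible M"
  shows "M *v (matrix_inv M *v x) = x" "matrix_inv M *v (M *v x) = x"
proof -
  have "M ** matrix_inv M = mat 1 \<and> matrix_inv M ** M = mat 1"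
    unfolding matrix_inv_def by (rule someI_ex) (use assms in \<open>simp add: invertible_def\<close>)
  then show "M *v (matrix_inv M *v x) = x" "matrix_inv M *v (M *v x) = x"
    by (simp_all add: matrix_vector_mul_assoc)
qed

lemma pos_def_invertible:
  assumes "pos_def M"
  shows "invertible M"
proof -
  have "x = 0" if "M *v x = 0" for x
    using assms that unfolding pos_def_def by force
  then show ?thesis
    using matrix_left_invertible_ker invertible_left_inverse by blast
qed

lemma inner_transpose_mult: "(transpose A *v x) \<bullet> y = x \<bullet> (A *v y)"
  for A :: "real^'n^'m"
  by (simp add: dot_lmul_matrix)

lemma inner_symmetric_mult: "transpose M = M \<Longrightarrow> (M *v x) \<bullet> y = x \<bullet> (M *v y)"
  for M :: "real^'n^'n"
  by (metis inner_transpose_mult)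

lemma matrix_inv_symmetric_inner:
  fixes M :: "real^'n^'n"
  assumes "invertible M" and sym: "\<And>x y. (M *v x) \<bullet> y = x \<bullet> (M *v y)"
  shows "(matrix_inv M *v x) \<bullet> y = x \<bullet> (matrix_inv M *v y)"
proof -
  have "(matrix_inv M *v x) \<bullet> y = (matrix_inv M *v x) \<bullet> (M *v (matrix_inv M *v y))"
    by (simp add: matrix_inv_cancel[OF assms(1)])
  also have "\<dots> = (M *v (matrix_inv M *v x)) \<bullet> (matrix_inv M *v y)"
    by (rule sym[symmetric])
  also have "\<dots> = x \<bullet> (matrix_inv M *v y)"
    by (simp add: matrix_inv_cancel[OF assms(1)])
  finally show ?thesis .
qed

lemma quadratic_form_lower_bound:
  fixes B :: "real^'n^'n"
  assumes pos: "\<And>x. x \<noteq> 0 \<Longrightarrow> 0 < (B *v x) \<bullet> x"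
  shows "\<exists>l>0. \<forall>x. l * (norm x)\<^sup>2 \<le> (B *v x) \<bullet> x"
proof -
  let ?q = "\<lambda>x. (B *v x) \<bullet> x"
  have "continuous_on (sphere 0 1) ?q"
    by (intro continuous_intros linear_continuous_on matrix_vector_mul_linear)
  moreover have "sphere (0::real^'n) 1 \<noteq> {}"
    by (metis mem_sphere_0 norm_axis_1 empty_iff)
  ultimately obtain x0 where x0: "x0 \<in> sphere 0 1" "\<And>y. y \<in> sphere 0 1 \<Longrightarrow> ?q x0 \<le> ?q y"
    using continuous_attains_inf[OF compact_sphere] by blast
  have "?q x0 * (norm x)\<^sup>2 \<le> ?q x" for x
  proof (cases "x = 0")
    case False
    then have "?q x0 \<le> ?q ((1 / norm x) *\<^sub>R x)"
      by (intro x0(2)) simp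
    also have "\<dots> = ?q x / (norm x)\<^sup>2"
      by (simp add: matrix_vector_mult_scaleR power2_eq_square)
    finally show ?thesis
      using False by (simp add: le_divide_eq)
  qed simp
  moreover have "0 < ?q x0"
    using x0(1) by (intro pos) auto
  ultimately show ?thesis
    by blast
qed

lemma inner_lasso_Abar: "(lasso_Abar A *v x) \<bullet> y = (A *v x) \<bullet> (A *v y)"
  unfolding lasso_Abar_def matrix_vector_mul_assoc[symmetric] by (rule inner_transpose_mult)

lemma pos_def_lasso_Abar_iff: "pos_def (lasso_Abar A) \<longleftrightarrow> (\<forall>x. x \<noteq> 0 \<longrightarrow> A *v x \<noteq> 0)"
  by (simp add: pos_def_def inner_commute[of _ "lasso_Abar A *v _"] inner_lasso_Abar)

lemma gdna_P_mult: "gdna_P Ab \<gamma> *v x = gdna_Q Ab \<gamma> *v x - x"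
  by (simp add: gdna_P_def matrix_vector_mult_diff_rdistrib)

lemma inner_diff_scaleR_self:
  fixes a b :: "'a::real_inner"
  shows "(a - c *\<^sub>R b) \<bullet> (a - c *\<^sub>R b) = a \<bullet> a - 2 * c * (a \<bullet> b) + c\<^sup>2 * (b \<bullet> b)"
  by (simp add: inner_diff_left inner_diff_right inner_commute[of b a] power2_eq_square
      algebra_simps)

lemma lasso_gdna_P_pos:
  fixes A :: "real^'n^'m"
  assumes A: "pos_def (transpose A ** A)" and M: "pos_def (mat 1 - \<gamma> *\<^sub>R lasso_Abar A)"
    and "0 < \<gamma>" and "x \<noteq> 0"
  shows "0 < (gdna_P (lasso_Abar A) \<gamma> *v x) \<bullet> x"
proof -
  (* with v = Q x and z = Abar v we have x = v - \<gamma> z and <P x, x> = \<gamma> (|A v|^2 - \<gamma> |z|^2);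
     this is positive since |A (v - \<gamma> z)|^2 \<ge> 0 and |z|^2 > \<gamma> |A z|^2 *)
  define v where "v = gdna_Q (lasso_Abar A) \<gamma> *v x"
  define z where "z = lasso_Abar A *v v"
  have x: "x = v - \<gamma> *\<^sub>R z"
    using matrix_inv_cancel(1)[OF pos_def_invertible[OF M], of x]
    by (simp add: v_def z_def gdna_Q_def matrix_vector_mult_diff_rdistrib
        scaleR_matrix_vector_assoc)
  define q r s where "q = v \<bullet> z" and "r = z \<bullet> z" and "s = (A *v z) \<bullet> (A *v z)"
  have q: "q = (A *v v) \<bullet> (A *v v)" and Avz: "(A *v v) \<bullet> (A *v z) = r"
    by (simp_all add: q_def r_def z_def inner_commute[of v] flip: inner_lasso_Abar)
  have "v \<noteq> 0"
    using \<open>x \<noteq> 0\<close> x by (auto simp: z_def)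
  then have "0 < q"
    using A by (simp add: q pos_def_lasso_Abar_iff[unfolded lasso_Abar_def])
  then have "z \<noteq> 0"
    by (auto simp: q_def)
  then have "0 < z \<bullet> ((mat 1 - \<gamma> *\<^sub>R lasso_Abar A) *v z)"
    using M unfolding pos_def_def by blast
  also have "\<dots> = r - \<gamma> * s"
    by (simp add: r_def s_def matrix_vector_mult_diff_rdistrib inner_diff_right
        inner_commute[of z "lasso_Abar A *v z"] inner_lasso_Abar flip: scaleR_matrix_vector_assoc)
  finally have "0 < r - \<gamma> * s" .
  moreover have "0 \<le> q - 2 * \<gamma> * r + \<gamma>\<^sup>2 * s"
    using inner_ge_zero[of "A *v (v - \<gamma> *\<^sub>R z)"]
    by (simp only: matrix_vector_mult_diff_distrib matrix_vector_mult_scaleR inner_diff_scaleR_self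
        q Avz s_def)
  moreover have "\<gamma> * (\<gamma> * s) < \<gamma> * r"
    using \<open>0 < \<gamma>\<close> calculation(1) by (intro mult_strict_left_mono) auto
  ultimately have "0 < q - \<gamma> * r"
    by (simp add: power2_eq_square mult.assoc)
  then have "0 < \<gamma> * (q - \<gamma> * r)"
    using \<open>0 < \<gamma>\<close> by simp
  also have "\<dots> = (gdna_P (lasso_Abar A) \<gamma> *v x) \<bullet> x"
    by (simp add: gdna_P_mult flip: v_def) (simp add: x inner_diff_left inner_diff_scaleR_self
        q_def r_def power2_eq_square inner_commute[of z v] algebra_simps)
  finally show ?thesis .
qed

section \<open>The damped Newton algorithm for quadratic plus l1 objectives\<close>

locale gdna_l1 =
  fixes Ab :: "real^'n^'n" and bb :: "real^'n" and \<mu> \<gamma> \<kappa> K :: real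
  assumes mu_pos: "0 < \<mu>" and gamma_pos: "0 < \<gamma>"
    and Ab_symmetric: "transpose Ab = Ab"
    and M_pos_def: "pos_def (mat 1 - \<gamma> *\<^sub>R Ab)"
    and kappa_pos: "0 < \<kappa>"
    and P_coercive: "\<And>x. \<kappa> * (norm x)\<^sup>2 \<le> (gdna_P Ab \<gamma> *v x) \<bullet> x"
    and Q_bounded: "\<And>x. norm (gdna_Q Ab \<gamma> *v x) \<le> K * norm x"
begin

abbreviation "Q \<equiv> gdna_Q Ab \<gamma>"
abbreviation "P \<equiv> gdna_P Ab \<gamma>"
abbreviation "c \<equiv> gdna_c Ab bb \<gamma>"
abbreviation "\<theta> \<equiv> \<gamma> * \<mu>"
abbreviation "S \<equiv> soft_threshold_vec \<theta>"
abbreviation "F \<equiv> gdna_grad Ab bb (lasso_g \<mu>) \<gamma>"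
abbreviation "\<psi> \<equiv> gdna_psi Ab bb (lasso_g \<mu>) \<gamma>"

lemma theta_pos: "0 < \<theta>"
  using mu_pos gamma_pos by simp

lemma M_inverse:
  shows "(mat 1 - \<gamma> *\<^sub>R Ab) *v (Q *v x) = x" "Q *v ((mat 1 - \<gamma> *\<^sub>R Ab) *v x) = x"
  unfolding gdna_Q_def using matrix_inv_cancel[OF pos_def_invertible[OF M_pos_def]] by simp_all

lemma Q_symmetric: "(Q *v x) \<bullet> y = x \<bullet> (Q *v y)"
  unfolding gdna_Q_def
proof (rule matrix_inv_symmetric_inner[OF pos_def_invertible[OF M_pos_def]])
  show "((mat 1 - \<gamma> *\<^sub>R Ab) *v x) \<bullet> y = x \<bullet> ((mat 1 - \<gamma> *\<^sub>R Ab) *v y)" for x y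
    using inner_symmetric_mult[OF Ab_symmetric, of x y]
    by (simp add: matrix_vector_mult_diff_rdistrib inner_diff_left inner_diff_right
        flip: scaleR_matrix_vector_assoc)
qed

lemma P_symmetric: "(P *v x) \<bullet> y = (P *v y) \<bullet> x"
  by (simp add: gdna_P_mult inner_diff_left Q_symmetric inner_commute[of x y]
      inner_commute[of x "Q *v y"])

lemma Q_eq_P_plus: "Q *v x = P *v x + x"
  by (simp add: gdna_P_mult)

lemma P_pos:
  assumes "x \<noteq> 0"
  shows "0 < (P *v x) \<bullet> x"
proof -
  have "0 < \<kappa> * (norm x)\<^sup>2"
    using kappa_pos assms by simp
  then show ?thesis
    using P_coercive[of x] by linarith
qed

lemma quadratic_Q_le: "(Q *v w) \<bullet> w \<le> K * (norm w)\<^sup>2"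
proof -
  have "(Q *v w) \<bullet> w \<le> norm (Q *v w) * norm w"
    by (rule norm_cauchy_schwarz)
  also have "\<dots> \<le> K * norm w * norm w"
    by (rule mult_right_mono[OF Q_bounded]) simp
  finally show ?thesis
    by (simp add: power2_eq_square mult.assoc)
qed

lemma K_pos: "0 < K"
proof -
  obtain x :: "real^'n" where "norm x = 1"
    using norm_axis_1 by blast
  then show ?thesis
    using P_coercive[of x] quadratic_Q_le[of x] kappa_pos Q_eq_P_plus[of x]
    by (simp add: inner_add_left power2_norm_eq_inner[symmetric])
qed

lemma grad_eq: "F y = Q *v y - S y + c"
  by (simp add: gdna_grad_def prox_lasso_g[OF mu_pos gamma_pos])

lemma grad_eq_P: "F y = P *v y + (y - S y) + c"
  by (simp add: grad_eq Q_eq_P_plus algebra_simps)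

lemma psi_eq: "\<psi> y = 1/2 * ((P *v y) \<bullet> y) + c \<bullet> y + (\<Sum>i\<in>UNIV. huber \<theta> (y$i))"
  by (simp add: gdna_psi_def moreau_env_lasso_g[OF mu_pos gamma_pos])

lemma quadratic_P_add:
  "(P *v (y + w)) \<bullet> (y + w) = (P *v y) \<bullet> y + 2 * ((P *v y) \<bullet> w) + (P *v w) \<bullet> w"
  using P_symmetric[of w y]
  by (simp add: matrix_vector_right_distrib inner_add_left inner_add_right)

lemma psi_le_quadratic_model: "\<psi> (y + w) \<le> \<psi> y + F y \<bullet> w + 1/2 * ((Q *v w) \<bullet> w)"
proof -
  have "(\<Sum>i\<in>UNIV. huber \<theta> ((y + w)$i))
      \<le> (\<Sum>i\<in>UNIV. huber \<theta> (y$i) + (y$i - soft_threshold \<theta> (y$i)) * w$i + (w$i)\<^sup>2 / 2)"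
    using theta_pos by (intro sum_mono) (simp add: huber_le_quadratic_model)
  also have "\<dots> = (\<Sum>i\<in>UNIV. huber \<theta> (y$i)) + (y - S y) \<bullet> w + (w \<bullet> w) / 2"
    by (simp add: sum.distrib inner_vec_eq_sum sum_divide_distrib power2_eq_square)
  finally have "\<psi> (y + w) \<le> 1/2 * ((P *v (y + w)) \<bullet> (y + w)) + c \<bullet> (y + w)
      + ((\<Sum>i\<in>UNIV. huber \<theta> (y$i)) + (y - S y) \<bullet> w + (w \<bullet> w) / 2)"
    by (simp add: psi_eq)
  also have "\<dots> = \<psi> y + F y \<bullet> w + 1/2 * ((Q *v w) \<bullet> w)"
    unfolding psi_eq grad_eq_P Q_eq_P_plus quadratic_P_add
    by (simp add: inner_add_left inner_add_right algebra_simps)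
  finally show ?thesis .
qed

lemma psi_diff_same_piece:
  assumes "\<And>i. same_soft_piece \<theta> (y$i) (z$i)"
  shows "\<psi> y - \<psi> z = 1/2 * ((F y + F z) \<bullet> (y - z))"
proof -
  have "(\<Sum>i\<in>UNIV. huber \<theta> (y$i)) - (\<Sum>i\<in>UNIV. huber \<theta> (z$i))
      = (\<Sum>i\<in>UNIV.
          ((y$i - soft_threshold \<theta> (y$i)) + (z$i - soft_threshold \<theta> (z$i))) * (y$i - z$i) / 2)"
    using theta_pos assms by (simp add: huber_diff_same_piece flip: sum_subtractf)
  also have "\<dots> = 1/2 * (((y - S y) + (z - S z)) \<bullet> (y - z))"
    by (simp add: inner_vec_eq_sum sum_divide_distrib)
  finally have huber_diff: "(\<Sum>i\<in>UNIV. huber \<theta> (y$i)) - (\<Sum>i\<in>UNIV. huber \<theta> (z$i))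
      = 1/2 * (((y - S y) + (z - S z)) \<bullet> (y - z))" .
  have "\<psi> y - \<psi> z = 1/2 * ((P *v y) \<bullet> y - (P *v z) \<bullet> z) + c \<bullet> (y - z)
      + ((\<Sum>i\<in>UNIV. huber \<theta> (y$i)) - (\<Sum>i\<in>UNIV. huber \<theta> (z$i)))"
    by (simp add: psi_eq inner_diff_right algebra_simps)
  also have "\<dots> = 1/2 * ((P *v y + P *v z) \<bullet> (y - z)) + c \<bullet> (y - z)
      + 1/2 * (((y - S y) + (z - S z)) \<bullet> (y - z))"
    using P_symmetric[of y z] by (simp add: huber_diff inner_add_left inner_diff_right)
  also have "\<dots> = 1/2 * ((F y + F z) \<bullet> (y - z))"
    unfolding grad_eq_P inner_add_left by (simp add: algebra_simps)
  finally show ?thesis .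
qed

lemma soft_threshold_vec_nonexpansive: "norm (S y - S z) \<le> norm (y - z)"
proof -
  have "(norm (S y - S z))\<^sup>2 \<le> (norm (y - z))\<^sup>2"
    unfolding norm_sq_vec_eq_sum
    using abs_soft_threshold_diff_le[of \<theta>] theta_pos
    by (intro sum_mono) (simp add: abs_le_square_iff)
  then show ?thesis
    by (rule power2_le_imp_le) simp
qed

lemma grad_strongly_monotone: "\<kappa> * (norm (y - z))\<^sup>2 \<le> (F y - F z) \<bullet> (y - z)"
proof -
  have "F y - F z = P *v (y - z) + ((y - S y) - (z - S z))"
    by (simp add: grad_eq_P matrix_vector_mult_diff_distrib algebra_simps)
  moreover have "0 \<le> ((y - S y) - (z - S z)) \<bullet> (y - z)"
    unfolding inner_vec_eq_sum using theta_pos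
    by (intro sum_nonneg) (simp add: soft_threshold_residual_monotone)
  ultimately show ?thesis
    using P_coercive[of "y - z"] by (simp add: inner_add_left)
qed

lemma grad_diff_lower: "\<kappa> * norm (y - z) \<le> norm (F y - F z)"
proof (cases "y = z")
  case False
  have "\<kappa> * norm (y - z) * norm (y - z) \<le> norm (F y - F z) * norm (y - z)"
    using grad_strongly_monotone[of y z] norm_cauchy_schwarz[of "F y - F z" "y - z"]
    by (simp add: power2_eq_square)
  then show ?thesis
    using False by simp
qed simp

lemma grad_lipschitz: "norm (F y - F z) \<le> (K + 1) * norm (y - z)"
proof -
  have "F y - F z = Q *v (y - z) - (S y - S z)"
    by (simp add: grad_eq matrix_vector_mult_diff_distrib algebra_simps)
  then have "norm (F y - F z) \<le> norm (Q *v (y - z)) + norm (S y - S z)"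
    by (metis norm_triangle_ineq4)
  also have "\<dots> \<le> K * norm (y - z) + norm (y - z)"
    using Q_bounded soft_threshold_vec_nonexpansive by (rule add_mono)
  finally show ?thesis
    by (simp add: algebra_simps)
qed

lemma psi_bounded_below: "- (norm c)\<^sup>2 / (2 * \<kappa>) \<le> \<psi> y"
proof -
  have "0 \<le> (\<kappa> * norm y - norm c)\<^sup>2 / (2 * \<kappa>)"
    using kappa_pos by simp
  also have "\<dots> = \<kappa> / 2 * (norm y)\<^sup>2 - norm c * norm y + (norm c)\<^sup>2 / (2 * \<kappa>)"
    using kappa_pos by (simp add: power2_eq_square field_simps)
  finally have "- (norm c)\<^sup>2 / (2 * \<kappa>) \<le> 1/2 * (\<kappa> * (norm y)\<^sup>2) - norm c * norm y"
    by simp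
  moreover have "- (norm c * norm y) \<le> c \<bullet> y"
    using norm_cauchy_schwarz[of "-c" y] by simp
  moreover have "0 \<le> (\<Sum>i\<in>UNIV. huber \<theta> (y$i))"
    using theta_pos by (intro sum_nonneg huber_nonneg) simp
  ultimately show ?thesis
    using P_coercive[of y] by (simp add: psi_eq)
qed

abbreviation "newton_dir \<equiv> gdna_dir Ab bb (lasso_g \<mu>) \<gamma>"

lemma newton_dir_iff:
  "newton_dir y d \<longleftrightarrow> ((1/\<gamma>) *\<^sub>R (- F y - P *v d), - (Q *v d + F y))
      \<in> limiting_normal (l1_graph \<mu>) (S y, (1/\<gamma>) *\<^sub>R (y - S y))"
  by (simp add: gdna_dir_def second_subdiff_def prox_lasso_g[OF mu_pos gamma_pos]
      subdiff_graph_lasso_g[OF mu_pos] Let_def)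

lemma abs_scaled_residual_less_iff: "\<bar>(t - soft_threshold \<theta> t) / \<gamma>\<bar> < \<mu> \<longleftrightarrow> \<bar>t\<bar> < \<theta>"
  using gamma_pos abs_soft_threshold_residual_less_iff[OF theta_pos, of t]
  by (simp add: abs_divide divide_less_eq mult.commute)

lemma newton_dir_coord:
  assumes "newton_dir y d"
  defines "u \<equiv> Q *v d + F y"
  shows "0 \<le> (d$i - u$i) * u$i" "\<theta> < \<bar>y$i\<bar> \<Longrightarrow> d$i = u$i" "\<bar>y$i\<bar> < \<theta> \<Longrightarrow> u$i = 0"
proof -
  have eq: "- F y - P *v d = d - u"
    by (simp add: u_def Q_eq_P_plus algebra_simps)
  have "((1/\<gamma>) *\<^sub>R (d - u), - u) \<in> limiting_normal (l1_graph \<mu>) (S y, (1/\<gamma>) *\<^sub>R (y - S y))"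
    using assms(1) unfolding newton_dir_iff eq u_def[symmetric] .
  then have "(soft_threshold \<theta> (y$i) \<noteq> 0 \<longrightarrow> (d$i - u$i) / \<gamma> = 0)
      \<and> (\<bar>(y$i - soft_threshold \<theta> (y$i)) / \<gamma>\<bar> < \<mu> \<longrightarrow> u$i = 0) \<and> (d$i - u$i) / \<gamma> * u$i \<ge> 0"
    using limiting_normal_l1_graph_imp[OF mu_pos, of "(1/\<gamma>) *\<^sub>R (d - u)" "- u" "S y" _ i]
    by (auto simp: divide_inverse_commute)
  moreover have "(d$i - u$i) / \<gamma> * u$i = ((d$i - u$i) * u$i) / \<gamma>"
    by simp
  ultimately show "0 \<le> (d$i - u$i) * u$i" "\<theta> < \<bar>y$i\<bar> \<Longrightarrow> d$i = u$i" "\<bar>y$i\<bar> < \<theta> \<Longrightarrow> u$i = 0"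
    using gamma_pos theta_pos abs_scaled_residual_less_iff[of "y$i"]
    by (auto simp: soft_threshold_nonzero_iff zero_le_divide_iff)
qed

lemma newton_dir_descent:
  assumes "newton_dir y d"
  shows "F y \<bullet> d \<le> - ((P *v d) \<bullet> d)" "norm (F y) \<le> (1 + K) * norm d"
proof -
  define u where "u = Q *v d + F y"
  have ud: "u$i * d$i \<le> d$i * d$i" and uu: "u$i * u$i \<le> d$i * d$i" for i
  proof -
    have "0 \<le> (d$i - u$i) * u$i"
      using newton_dir_coord(1)[OF assms] by (simp add: u_def)
    moreover have "d$i * d$i - u$i * d$i = (d$i - u$i) * (d$i - u$i) + (d$i - u$i) * u$i"
      by (simp add: algebra_simps)
    moreover have "0 \<le> (d$i - u$i) * (d$i - u$i)"
      by simp
    ultimately show "u$i * d$i \<le> d$i * d$i" "u$i * u$i \<le> d$i * d$i"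
      by (simp_all add: algebra_simps)
  qed
  have "u \<bullet> d \<le> d \<bullet> d"
    unfolding inner_vec_eq_sum by (intro sum_mono ud)
  then show "F y \<bullet> d \<le> - ((P *v d) \<bullet> d)"
    by (simp add: u_def Q_eq_P_plus inner_add_left)
  have "(norm u)\<^sup>2 \<le> (norm d)\<^sup>2"
    unfolding norm_sq_vec_eq_sum by (intro sum_mono) (simp add: uu power2_eq_square)
  then have "norm u \<le> norm d"
    by (rule power2_le_imp_le) simp
  moreover have "norm (F y) \<le> norm u + norm (Q *v d)"
    using norm_triangle_ineq4[of u "Q *v d"] by (simp add: u_def)
  ultimately show "norm (F y) \<le> (1 + K) * norm d"
    using Q_bounded[of d] by (simp add: algebra_simps)
qed

lemma perturbed_prox_pair_in_l1_graph:
  assumes "0 \<le> \<tau>"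
  shows "(S y + \<tau> *\<^sub>R (\<chi> i. if \<bar>y$i\<bar> = \<theta> then y$i else 0), (1/\<gamma>) *\<^sub>R (y - S y)) \<in> l1_graph \<mu>"
proof -
  have "in_abs_subdiff \<mu> (soft_threshold \<theta> (y$i) + (if \<bar>y$i\<bar> = \<theta> then \<tau> * y$i else 0))
      ((y$i - soft_threshold \<theta> (y$i)) / \<gamma>)" for i
    unfolding in_abs_subdiff_divide_iff[OF gamma_pos]
    using theta_pos assms by (intro in_abs_subdiff_soft_threshold) simp_all
  moreover have "(S y + \<tau> *\<^sub>R (\<chi> i. if \<bar>y$i\<bar> = \<theta> then y$i else 0))$i
      = soft_threshold \<theta> (y$i) + (if \<bar>y$i\<bar> = \<theta> then \<tau> * y$i else 0)"
    and "((1/\<gamma>) *\<^sub>R (y - S y))$i = (y$i - soft_threshold \<theta> (y$i)) / \<gamma>" for i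
    by (simp_all add: divide_inverse_commute)
  ultimately show ?thesis
    unfolding l1_graph_def mem_Collect_eq prod.case by simp
qed

lemma newton_dir_regular_normal:
  assumes flat: "\<And>i. \<theta> \<le> \<bar>y$i\<bar> \<Longrightarrow> (F y + P *v d)$i = 0"
    and fixed: "\<And>i. \<bar>y$i\<bar> < \<theta> \<Longrightarrow> (Q *v d + F y)$i = 0"
    and "0 < \<tau>"
  shows "((1/\<gamma>) *\<^sub>R (- F y - P *v d), - (Q *v d + F y)) \<in> regular_normal (l1_graph \<mu>)
    (S y + \<tau> *\<^sub>R (\<chi> i. if \<bar>y$i\<bar> = \<theta> then y$i else 0), (1/\<gamma>) *\<^sub>R (y - S y))"
proof (rule regular_normal_l1_graph_if[OF perturbed_prox_pair_in_l1_graph])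
  fix i
  show "(S y + \<tau> *\<^sub>R (\<chi> i. if \<bar>y$i\<bar> = \<theta> then y$i else 0))$i \<noteq> 0
      \<and> ((1/\<gamma>) *\<^sub>R (- F y - P *v d))$i = 0
    \<or> \<bar>((1/\<gamma>) *\<^sub>R (y - S y))$i\<bar> < \<mu> \<and> (- (Q *v d + F y))$i = 0"
  proof (cases "\<bar>y$i\<bar> < \<theta>")
    case True
    then show ?thesis
      using fixed[OF True] abs_scaled_residual_less_iff[of "y$i"] by simp
  next
    case False
    then have "(S y + \<tau> *\<^sub>R (\<chi> i. if \<bar>y$i\<bar> = \<theta> then y$i else 0))$i \<noteq> 0"
      using soft_threshold_perturbed_nonzero[OF theta_pos \<open>0 < \<tau>\<close> leI[OF False]]
      by (simp split: if_split_asm)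
    then show ?thesis
      using flat[of i] False by simp
  qed
qed (use \<open>0 < \<tau>\<close> in simp)

lemma newton_dir_if:
  assumes "\<And>i. \<theta> \<le> \<bar>y$i\<bar> \<Longrightarrow> (F y + P *v d)$i = 0"
    and "\<And>i. \<bar>y$i\<bar> < \<theta> \<Longrightarrow> (Q *v d + F y)$i = 0"
  shows "newton_dir y d"
proof -
  (* the limiting normal is approached by regular normals at graph points where the
     coordinates with |y$i| = \<theta> are moved off the kink *)
  define e :: "real^'n" where "e = (\<chi> i. if \<bar>y$i\<bar> = \<theta> then y$i else 0)"
  define zs where "zs k = (S y + inverse (real (Suc k)) *\<^sub>R e, (1/\<gamma>) *\<^sub>R (y - S y))" for k
  have "zs k \<in> l1_graph \<mu>" for k
    unfolding zs_def e_def by (rule perturbed_prox_pair_in_l1_graph) simp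
  moreover have "((1/\<gamma>) *\<^sub>R (- F y - P *v d), - (Q *v d + F y)) \<in> regular_normal (l1_graph \<mu>) (zs k)"
    for k
    unfolding zs_def e_def using assms by (intro newton_dir_regular_normal) simp_all
  moreover have "(\<lambda>k. S y + inverse (real (Suc k)) *\<^sub>R e) \<longlonglongrightarrow> S y + 0 *\<^sub>R e"
    by (intro tendsto_add tendsto_const tendsto_scaleR LIMSEQ_inverse_real_of_nat)
  then have "zs \<longlonglongrightarrow> (S y, (1/\<gamma>) *\<^sub>R (y - S y))"
    unfolding zs_def by (intro tendsto_Pair tendsto_const) simp
  ultimately show ?thesis
    unfolding newton_dir_iff limiting_normal_def by blast
qed

lemma newton_dir_exists: "\<exists>d. newton_dir y d"
proof -
  define D :: "real^'n^'n" where "D = (\<chi> i j. if i = j \<and> \<bar>y$i\<bar> < \<theta> then 1 else 0)"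
  have D: "(D *v x)$i = (if \<bar>y$i\<bar> < \<theta> then x$i else 0)" for x i
  proof -
    have "(D *v x)$i = (\<Sum>j\<in>UNIV. if j = i then (if \<bar>y$i\<bar> < \<theta> then x$i else 0) else 0)"
      unfolding D_def matrix_vector_mult_def vec_lambda_beta by (intro sum.cong) auto
    then show ?thesis
      by simp
  qed
  have "pos_def (P + D)"
    unfolding pos_def_def
  proof (intro allI impI)
    fix x :: "real^'n"
    assume "x \<noteq> 0"
    have "0 \<le> (D *v x) \<bullet> x"
      unfolding inner_vec_eq_sum by (intro sum_nonneg) (simp add: D)
    then show "0 < x \<bullet> ((P + D) *v x)"
      using P_pos[OF \<open>x \<noteq> 0\<close>]
      by (simp add: matrix_vector_mult_add_rdistrib inner_add_right inner_commute[of x])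
  qed
  define d where "d = matrix_inv (P + D) *v (- F y)"
  have Nd: "(P + D) *v d = - F y"
    unfolding d_def by (rule matrix_inv_cancel(1)[OF pos_def_invertible[OF \<open>pos_def (P + D)\<close>]])
  have coord: "(P *v d)$i + (if \<bar>y$i\<bar> < \<theta> then d$i else 0) = - F y $ i" for i
    using arg_cong[OF Nd, of "\<lambda>v. v$i"] by (simp add: matrix_vector_mult_add_rdistrib D)
  have "newton_dir y d"
  proof (rule newton_dir_if)
    show "(F y + P *v d)$i = 0" if "\<theta> \<le> \<bar>y$i\<bar>" for i
      using coord[of i] that by simp
    show "(Q *v d + F y)$i = 0" if "\<bar>y$i\<bar> < \<theta>" for i
      using coord[of i] that by (simp add: Q_eq_P_plus)
  qed
  then show ?thesis ..
qed

abbreviation "armijo \<equiv> gdna_armijo Ab bb (lasso_g \<mu>) \<gamma>"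
abbreviation "run \<equiv> gdna_run Ab bb (lasso_g \<mu>) \<gamma>"

lemma armijo_if_small_step:
  assumes "newton_dir y d" "\<sigma> \<le> 1" "0 < \<tau>" "\<tau> * K \<le> 2 * (1 - \<sigma>) * \<kappa>"
  shows "armijo \<sigma> y d \<tau>"
proof -
  have descent: "F y \<bullet> d \<le> - (\<kappa> * (norm d)\<^sup>2)"
    using newton_dir_descent(1)[OF assms(1)] P_coercive[of d] by linarith
  have "1/2 * ((Q *v (\<tau> *\<^sub>R d)) \<bullet> (\<tau> *\<^sub>R d)) \<le> 1/2 * \<tau> * ((\<tau> * K) * (norm d)\<^sup>2)"
    using quadratic_Q_le[of d] assms(3)
    by (simp add: matrix_vector_mult_scaleR mult_left_mono mult.assoc)
  also have "\<dots> \<le> 1/2 * \<tau> * ((2 * (1 - \<sigma>) * \<kappa>) * (norm d)\<^sup>2)"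
    using assms(3,4) by (intro mult_left_mono mult_right_mono) auto
  also have "\<dots> = \<tau> * (1 - \<sigma>) * (\<kappa> * (norm d)\<^sup>2)"
    by (simp add: algebra_simps)
  also have "\<dots> \<le> \<tau> * (1 - \<sigma>) * - (F y \<bullet> d)"
    using assms(2,3) descent by (intro mult_left_mono) auto
  finally show ?thesis
    using psi_le_quadratic_model[of y "\<tau> *\<^sub>R d"] by (simp add: gdna_armijo_def algebra_simps)
qed

lemma armijo_exists:
  assumes "newton_dir y d" "\<sigma> < 1" "0 < \<beta>" "\<beta> < 1"
  shows "\<exists>j. armijo \<sigma> y d (\<beta> ^ j)"
proof -
  have "0 < 2 * (1 - \<sigma>) * \<kappa> / K"
    using assms(2) kappa_pos K_pos by simp
  then obtain j where "\<beta> ^ j < 2 * (1 - \<sigma>) * \<kappa> / K"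
    using real_arch_pow_inv assms(4) by blast
  then have "\<beta> ^ j * K \<le> 2 * (1 - \<sigma>) * \<kappa>"
    using K_pos by (simp add: pos_less_divide_eq less_imp_le)
  then have "armijo \<sigma> y d (\<beta> ^ j)"
    using assms(2,3) by (intro armijo_if_small_step[OF assms(1)]) auto
  then show ?thesis ..
qed

lemma armijo_step_lower_bound:
  assumes "newton_dir y d" "\<sigma> \<le> 1" "0 < \<beta>" "\<beta> < 1"
  shows "min 1 (\<beta> * (2 * (1 - \<sigma>) * \<kappa> / K)) \<le> \<beta> ^ (LEAST j. armijo \<sigma> y d (\<beta> ^ j))"
proof (cases "LEAST j. armijo \<sigma> y d (\<beta> ^ j)")
  case (Suc j)
  then have "\<not> armijo \<sigma> y d (\<beta> ^ j)"
    by (metis lessI not_less_Least)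
  then have "\<not> \<beta> ^ j * K \<le> 2 * (1 - \<sigma>) * \<kappa>"
    using armijo_if_small_step[OF assms(1,2)] assms(3) by auto
  then have "2 * (1 - \<sigma>) * \<kappa> < \<beta> ^ j * K"
    by simp
  then have "2 * (1 - \<sigma>) * \<kappa> / K < \<beta> ^ j"
    using K_pos by (simp add: pos_divide_less_eq)
  then have "\<beta> * (2 * (1 - \<sigma>) * \<kappa> / K) \<le> \<beta> * \<beta> ^ j"
    using assms(3) by (intro mult_left_mono) auto
  then show ?thesis
    unfolding Suc power_Suc by (rule min.coboundedI2)
qed simp

lemma well_defined:
  assumes "\<sigma> < 1" "0 < \<beta>" "\<beta> < 1"
  shows "gdna_well_defined Ab bb (lasso_g \<mu>) \<gamma> \<sigma> \<beta>"
  unfolding gdna_well_defined_def using newton_dir_exists armijo_exists[OF _ assms] by blast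

lemma armijo_step_decrease:
  assumes dir: "newton_dir y d" and "armijo \<sigma> y d t" "0 < \<sigma>" "0 < \<tau>" "\<tau> \<le> t"
  shows "\<psi> (y + t *\<^sub>R d) \<le> \<psi> y - \<sigma> * \<tau> * \<kappa> / (1 + K)\<^sup>2 * (norm (F y))\<^sup>2"
proof -
  have "\<psi> (y + t *\<^sub>R d) \<le> \<psi> y + \<sigma> * t * (F y \<bullet> d)"
    using assms(2) by (simp add: gdna_armijo_def)
  also have "\<dots> \<le> \<psi> y - \<sigma> * \<tau> * (\<kappa> * (norm d)\<^sup>2)"
  proof -
    have "\<tau> * (\<kappa> * (norm d)\<^sup>2) \<le> t * (\<kappa> * (norm d)\<^sup>2)"
      using assms(5) kappa_pos by (intro mult_right_mono) simp_all
    also have "\<dots> \<le> t * - (F y \<bullet> d)"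
      using newton_dir_descent(1)[OF dir] P_coercive[of d] assms(4,5)
      by (intro mult_left_mono) auto
    finally have "\<tau> * (\<kappa> * (norm d)\<^sup>2) \<le> t * - (F y \<bullet> d)" .
    from mult_left_mono[OF this, of \<sigma>] assms(3) show ?thesis
      by (simp add: algebra_simps)
  qed
  also have "\<dots> \<le> \<psi> y - \<sigma> * \<tau> * \<kappa> / (1 + K)\<^sup>2 * (norm (F y))\<^sup>2"
  proof -
    have "(norm (F y))\<^sup>2 \<le> (1 + K)\<^sup>2 * (norm d)\<^sup>2"
      using newton_dir_descent(2)[OF dir] by (metis norm_ge_zero power_mono power_mult_distrib)
    then have "(norm (F y))\<^sup>2 / (1 + K)\<^sup>2 \<le> (norm d)\<^sup>2"
      using K_pos by (simp add: divide_le_eq mult.commute)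
    then have "\<sigma> * \<tau> * \<kappa> * ((norm (F y))\<^sup>2 / (1 + K)\<^sup>2) \<le> \<sigma> * \<tau> * \<kappa> * (norm d)\<^sup>2"
      using assms(3,4) kappa_pos by (intro mult_left_mono) auto
    then show ?thesis
      by (simp add: mult.assoc)
  qed
  finally show ?thesis .
qed

lemma run_sufficient_decrease:
  assumes "run \<sigma> \<beta> ys ds" "0 < \<sigma>" "\<sigma> < 1" "0 < \<beta>" "\<beta> < 1"
  shows "\<exists>\<rho>>0. \<forall>k. \<psi> (ys (Suc k)) \<le> \<psi> (ys k) - \<rho> * (norm (F (ys k)))\<^sup>2"
proof (intro exI conjI allI)
  define \<tau> where "\<tau> = min 1 (\<beta> * (2 * (1 - \<sigma>) * \<kappa> / K))"
  have "0 < \<tau>"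
    using assms(2-5) kappa_pos K_pos by (auto simp: \<tau>_def)
  then show "0 < \<sigma> * \<tau> * \<kappa> / (1 + K)\<^sup>2"
    using assms(2) kappa_pos K_pos by simp
  fix k
  show "\<psi> (ys (Suc k)) \<le> \<psi> (ys k) - \<sigma> * \<tau> * \<kappa> / (1 + K)\<^sup>2 * (norm (F (ys k)))\<^sup>2"
  proof (cases "F (ys k) = 0")
    case False
    let ?t = "\<beta> ^ (LEAST j. armijo \<sigma> (ys k) (ds k) (\<beta> ^ j))"
    have dir: "newton_dir (ys k) (ds k)" and "ys (Suc k) = ys k + ?t *\<^sub>R ds k"
      using assms(1) False by (simp_all add: gdna_run_def)
    moreover have "armijo \<sigma> (ys k) (ds k) ?t"
      using LeastI_ex[OF armijo_exists[OF dir assms(3-5)]] .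
    moreover have "\<tau> \<le> ?t"
      using armijo_step_lower_bound[OF dir _ assms(4,5)] assms(3) by (simp add: \<tau>_def)
    ultimately show ?thesis
      using armijo_step_decrease[OF dir _ assms(2) \<open>0 < \<tau>\<close>] by simp
  qed (use assms(1) in \<open>simp add: gdna_run_def\<close>)
qed

lemma run_grad_tendsto_zero:
  assumes "run \<sigma> \<beta> ys ds" "0 < \<sigma>" "\<sigma> < 1" "0 < \<beta>" "\<beta> < 1"
  shows "(\<lambda>k. F (ys k)) \<longlonglongrightarrow> 0"
proof -
  obtain \<rho> where "0 < \<rho>" and decrease: "\<And>k. \<psi> (ys (Suc k)) \<le> \<psi> (ys k) - \<rho> * (norm (F (ys k)))\<^sup>2"
    using run_sufficient_decrease[OF assms] by blast
  have telescope: "\<rho> * (\<Sum>k<N. (norm (F (ys k)))\<^sup>2) \<le> \<psi> (ys 0) - \<psi> (ys N)" for N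
  proof (induction N)
    case (Suc N)
    then show ?case
      using decrease[of N] by (simp add: distrib_left)
  qed simp
  have "summable (\<lambda>k. (norm (F (ys k)))\<^sup>2)"
  proof (rule summableI_nonneg_bounded)
    show "(\<Sum>k<N. (norm (F (ys k)))\<^sup>2) \<le> (\<psi> (ys 0) + (norm c)\<^sup>2 / (2 * \<kappa>)) / \<rho>" for N
      using telescope[of N] psi_bounded_below[of "ys N"] \<open>0 < \<rho>\<close>
      by (simp add: le_divide_eq mult.commute)
  qed simp
  then have "(\<lambda>k. sqrt ((norm (F (ys k)))\<^sup>2)) \<longlonglongrightarrow> sqrt 0"
    by (intro tendsto_real_sqrt summable_LIMSEQ_zero)
  then show ?thesis
    by (simp add: tendsto_norm_zero_iff)
qed

lemma run_converges:
  assumes "run \<sigma> \<beta> ys ds" "0 < \<sigma>" "\<sigma> < 1" "0 < \<beta>" "\<beta> < 1"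
  shows "\<exists>yb. ys \<longlonglongrightarrow> yb \<and> F yb = 0"
proof -
  have F0: "(\<lambda>k. F (ys k)) \<longlonglongrightarrow> 0"
    by (rule run_grad_tendsto_zero[OF assms])
  have "Cauchy ys"
  proof (rule CauchyI)
    fix e :: real
    assume "0 < e"
    then obtain M where M: "\<And>k. M \<le> k \<Longrightarrow> norm (F (ys k)) < \<kappa> * e / 2"
      using F0 kappa_pos unfolding LIMSEQ_iff by (metis diff_zero half_gt_zero mult_pos_pos)
    have "norm (ys m - ys n) < e" if "M \<le> m" "M \<le> n" for m n
    proof -
      have "\<kappa> * norm (ys m - ys n) \<le> norm (F (ys m)) + norm (F (ys n))"
        using grad_diff_lower[of "ys m" "ys n"] norm_triangle_ineq4[of "F (ys m)" "F (ys n)"]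
        by linarith
      also have "\<dots> < \<kappa> * e"
        using M[OF that(1)] M[OF that(2)] by linarith
      finally show ?thesis
        using kappa_pos by simp
    qed
    then show "\<exists>M. \<forall>m\<ge>M. \<forall>n\<ge>M. norm (ys m - ys n) < e"
      by blast
  qed
  then obtain yb where yb: "ys \<longlonglongrightarrow> yb"
    using Cauchy_convergent_iff convergent_def by blast
  have "(\<lambda>k. F (ys k) - F yb) \<longlonglongrightarrow> 0"
  proof (rule Lim_null_comparison)
    show "\<forall>\<^sub>F k in sequentially. norm (F (ys k) - F yb) \<le> (K + 1) * norm (ys k - yb)"
      by (simp add: grad_lipschitz)
    show "(\<lambda>k. (K + 1) * norm (ys k - yb)) \<longlonglongrightarrow> 0"
      using yb by (intro tendsto_mult_right_zero) (simp add: tendsto_norm_zero_iff LIM_zero)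
  qed
  then have "F yb = 0"
    using F0 LIMSEQ_unique by (fastforce simp: LIM_zero_iff)
  then show ?thesis
    using yb by blast
qed

lemma newton_step_error_coord:
  assumes "F yb = 0" "\<And>i. same_soft_piece \<theta> (y$i) (yb$i)" "newton_dir y d"
  shows "(P *v (y + d - yb))$i * (Q *v (y + d - yb))$i \<le> 0"
proof -
  define s where "s = y + d - yb"
  define u where "u = Q *v d + F y"
  have "F y = Q *v (y - yb) - (S y - S yb)"
    using assms(1) by (simp add: grad_eq matrix_vector_mult_diff_distrib algebra_simps)
  then have u: "u = Q *v s - (S y - S yb)" and du: "d - u = - (P *v s) - (y - yb) + (S y - S yb)"
    by (simp_all add: u_def s_def Q_eq_P_plus matrix_vector_right_distrib
        matrix_vector_mult_diff_distrib algebra_simps)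
  have dir: "0 \<le> (d$i - u$i) * u$i" "\<theta> < \<bar>y$i\<bar> \<Longrightarrow> d$i = u$i" "\<bar>y$i\<bar> < \<theta> \<Longrightarrow> u$i = 0"
    using newton_dir_coord[OF assms(3)] by (simp_all add: u_def)
  have ui: "u$i = (Q *v s)$i - (soft_threshold \<theta> (y$i) - soft_threshold \<theta> (yb$i))"
    and dui: "d$i - u$i = - (P *v s)$i - (y$i - yb$i)
        + (soft_threshold \<theta> (y$i) - soft_threshold \<theta> (yb$i))"
    using arg_cong[OF u, of "\<lambda>v. v$i"] arg_cong[OF du, of "\<lambda>v. v$i"] by simp_all
  from soft_threshold_diff_same_piece[OF theta_pos assms(2)[of i]]
  have "(P *v s)$i * (Q *v s)$i \<le> 0"
  proof (elim disjE conjE)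
    assume "soft_threshold \<theta> (y$i) - soft_threshold \<theta> (yb$i) = y$i - yb$i" "\<theta> < \<bar>y$i\<bar>"
    then show ?thesis
      using dir(2) dui by simp
  next
    assume "soft_threshold \<theta> (y$i) - soft_threshold \<theta> (yb$i) = 0" "\<bar>y$i\<bar> < \<theta>"
    then show ?thesis
      using dir(3) ui by simp
  next
    assume "y$i = yb$i"
    then have "d$i - u$i = - (P *v s)$i" "u$i = (Q *v s)$i"
      using ui dui by simp_all
    then show ?thesis
      using dir(1) by (metis minus_mult_left neg_0_le_iff_le)
  qed
  then show ?thesis
    by (simp add: s_def)
qed

lemma newton_step_exact:
  assumes "F yb = 0" "\<And>i. same_soft_piece \<theta> (y$i) (yb$i)" "newton_dir y d"
  shows "y + d = yb"
proof -
  define s where "s = y + d - yb"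
  have "(P *v s)$i * s$i \<le> 0" for i
  proof -
    have "(P *v s)$i * s$i = (P *v s)$i * (Q *v s)$i - (P *v s)$i * (P *v s)$i"
      by (simp add: Q_eq_P_plus algebra_simps)
    then show ?thesis
      using newton_step_error_coord[OF assms, of i, folded s_def] zero_le_square[of "(P *v s)$i"]
      by linarith
  qed
  then have "(P *v s) \<bullet> s \<le> 0"
    unfolding inner_vec_eq_sum by (rule sum_nonpos)
  then have "s = 0"
    using P_pos[of s] by fastforce
  then show ?thesis
    by (simp add: s_def)
qed

lemma armijo_unit_step:
  assumes "F yb = 0" "\<And>i. same_soft_piece \<theta> (y$i) (yb$i)" "newton_dir y d" "\<sigma> \<le> 1/2"
  shows "armijo \<sigma> y d 1"
proof -
  have d: "d = - (y - yb)"
    using newton_step_exact[OF assms(1-3)] by (simp add: algebra_simps)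
  have "\<psi> y - \<psi> yb = 1/2 * (F y \<bullet> (y - yb))"
    using psi_diff_same_piece[OF assms(2)] assms(1) by simp
  moreover have nonneg: "0 \<le> F y \<bullet> (y - yb)"
  proof -
    have "0 \<le> \<kappa> * (norm (y - yb))\<^sup>2"
      using kappa_pos by simp
    also have "\<dots> \<le> F y \<bullet> (y - yb)"
      using grad_strongly_monotone[of y yb] assms(1) by simp
    finally show ?thesis .
  qed
  moreover have "\<sigma> * (F y \<bullet> d) = - (\<sigma> * (F y \<bullet> (y - yb)))"
    by (simp add: d inner_diff_right algebra_simps)
  ultimately have "\<psi> yb \<le> \<psi> y + \<sigma> * (F y \<bullet> d)"
    using mult_right_mono[OF assms(4) nonneg] by linarith
  moreover have "y + 1 *\<^sub>R d = yb"
    using newton_step_exact[OF assms(1-3)] by simp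
  ultimately show ?thesis
    unfolding gdna_armijo_def by simp
qed

lemma run_eventually_at_limit:
  assumes "run \<sigma> \<beta> ys ds" "\<sigma> \<le> 1/2" "ys \<longlonglongrightarrow> yb" "F yb = 0"
  shows "\<forall>\<^sub>F k in sequentially. ys (Suc k) = yb"
proof -
  have "\<forall>\<^sub>F k in sequentially. same_soft_piece \<theta> (ys k $ i) (yb $ i)" for i
    using eventually_same_soft_piece[OF theta_pos] tendsto_vec_nth[OF assms(3)]
    by (rule eventually_compose_filterlim)
  then have "\<forall>\<^sub>F k in sequentially. \<forall>i. same_soft_piece \<theta> (ys k $ i) (yb $ i)"
    by (rule eventually_all_finite)
  then show ?thesis
  proof eventually_elim
    case (elim k)
    show ?case
    proof (cases "F (ys k) = 0")
      case True
      then have "\<kappa> * norm (ys k - yb) \<le> 0"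
        using grad_diff_lower[of "ys k" yb] assms(4) by simp
      then have "ys k = yb"
        using kappa_pos by (simp add: mult_le_0_iff)
      then show ?thesis
        using assms(1) True by (simp add: gdna_run_def)
    next
      case False
      then have dir: "newton_dir (ys k) (ds k)"
        and next_eq: "ys (Suc k) = ys k + \<beta> ^ (LEAST j. armijo \<sigma> (ys k) (ds k) (\<beta> ^ j)) *\<^sub>R ds k"
        using assms(1) by (simp_all add: gdna_run_def)
      have "armijo \<sigma> (ys k) (ds k) (\<beta> ^ 0)"
        using armijo_unit_step[OF assms(4) _ dir assms(2)] elim by simp
      then have "(LEAST j. armijo \<sigma> (ys k) (ds k) (\<beta> ^ j)) = 0"
        by (rule Least_eq_0)
      then show ?thesis
        using next_eq newton_step_exact[OF assms(4) _ dir] elim by simp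
    qed
  qed
qed

lemma run_q_superlinear:
  assumes "run \<sigma> \<beta> ys ds" "0 < \<sigma>" "\<sigma> < 1/2" "0 < \<beta>" "\<beta> < 1"
  shows "\<exists>yb. ys \<longlonglongrightarrow> yb \<and> q_superlinear ys yb \<and> F yb = 0"
proof -
  obtain yb where yb: "ys \<longlonglongrightarrow> yb" "F yb = 0"
    using run_converges[OF assms(1,2) _ assms(4,5)] assms(3) by auto
  (* the quotients vanish as soon as ys (Suc k) = yb, even if ys k = yb, because x / 0 = 0 *)
  have "\<forall>\<^sub>F k in sequentially. norm (ys (Suc k) - yb) / norm (ys k - yb) = 0"
    using run_eventually_at_limit[OF assms(1) _ yb] assms(3) by (auto elim: eventually_mono)
  then have "(\<lambda>k. norm (ys (Suc k) - yb) / norm (ys k - yb)) \<longlonglongrightarrow> 0"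
    by (rule tendsto_eventually)
  then show ?thesis
    using yb unfolding q_superlinear_def by blast
qed

lemma grad_zero_imp_stationary:
  assumes "F yb = 0"
  defines "xb \<equiv> Q *v yb + c"
  shows "(xb, (1/\<gamma>) *\<^sub>R (yb - xb)) \<in> l1_graph \<mu>" "Ab *v xb + bb + (1/\<gamma>) *\<^sub>R (yb - xb) = 0"
proof -
  have "xb = S yb"
    using assms by (simp add: grad_eq algebra_simps)
  then show "(xb, (1/\<gamma>) *\<^sub>R (yb - xb)) \<in> l1_graph \<mu>"
    using perturbed_prox_pair_in_l1_graph[of 0 yb] by simp
  have "(mat 1 - \<gamma> *\<^sub>R Ab) *v xb = yb + \<gamma> *\<^sub>R bb"
    by (simp add: xb_def gdna_c_def matrix_vector_right_distrib matrix_vector_mult_scaleR M_inverse)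
  moreover have "(mat 1 - \<gamma> *\<^sub>R Ab) *v xb = xb - \<gamma> *\<^sub>R (Ab *v xb)"
    by (simp add: matrix_vector_mult_diff_rdistrib flip: scaleR_matrix_vector_assoc)
  ultimately have "yb - xb = - \<gamma> *\<^sub>R (Ab *v xb + bb)"
    by (simp add: scaleR_add_right algebra_simps)
  then show "Ab *v xb + bb + (1/\<gamma>) *\<^sub>R (yb - xb) = 0"
    using gamma_pos by simp
qed

end

section \<open>Strong convexity and tilt stability\<close>

definition strongly_convex :: "real \<Rightarrow> ('a::real_normed_vector \<Rightarrow> real) \<Rightarrow> bool" where
  "strongly_convex \<alpha> f \<longleftrightarrow> (\<forall>x y t. 0 \<le> t \<longrightarrow> t \<le> 1 \<longrightarrow>
     f ((1 - t) *\<^sub>R x + t *\<^sub>R y) \<le> (1 - t) * f x + t * f y - \<alpha> / 2 * t * (1 - t) * (norm (y - x))\<^sup>2)"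

lemma strongly_convex_minus_linear:
  fixes f :: "'a::real_inner \<Rightarrow> real"
  assumes "strongly_convex \<alpha> f"
  shows "strongly_convex \<alpha> (\<lambda>x. f x - v \<bullet> x)"
  using assms unfolding strongly_convex_def by (simp add: inner_add_right algebra_simps)

lemma strongly_convex_min_growth:
  assumes "strongly_convex \<alpha> f" "convex C" "x0 \<in> C" "\<forall>z\<in>C. f x0 \<le> f z" "z \<in> C"
  shows "f x0 + \<alpha> / 2 * (norm (z - x0))\<^sup>2 \<le> f z"
proof -
  have "s * (\<alpha> / 2 * (norm (z - x0))\<^sup>2) \<le> f z - f x0" if "0 < s" "s < 1" for s
  proof -
    have "s *\<^sub>R x0 + (1 - s) *\<^sub>R z \<in> C"
      using convexD[OF assms(2,3,5), of s "1 - s"] that by simp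
    then have "f x0 \<le> f (s *\<^sub>R x0 + (1 - s) *\<^sub>R z)"
      using assms(4) by blast
    also have "\<dots> \<le> s * f x0 + (1 - s) * f z - \<alpha> / 2 * (1 - s) * s * (norm (z - x0))\<^sup>2"
      using assms(1)[unfolded strongly_convex_def, rule_format, of "1 - s" x0 z] that by simp
    finally have "(1 - s) * (s * (\<alpha> / 2 * (norm (z - x0))\<^sup>2)) \<le> (1 - s) * (f z - f x0)"
      by (simp add: algebra_simps)
    then show ?thesis
      using that by simp
  qed
  then show ?thesis
    using field_le_mult_one_interval by force
qed

lemma strongly_convex_argmin:
  assumes "strongly_convex \<alpha> f" "0 < \<alpha>" "\<forall>z. f x0 \<le> f z"
  shows "{x. \<forall>z. f x \<le> f z} = {x0}"
proof (intro set_eqI iffI)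
  fix x
  assume "x \<in> {x. \<forall>z. f x \<le> f z}"
  then have "f x \<le> f x0"
    by simp
  moreover have "f x0 + \<alpha> / 2 * (norm (x - x0))\<^sup>2 \<le> f x"
    using strongly_convex_min_growth[OF assms(1) convex_UNIV, of x0 x] assms(3) by simp
  ultimately have "\<alpha> / 2 * (norm (x - x0))\<^sup>2 \<le> 0"
    by linarith
  then show "x \<in> {x0}"
    using assms(2) by (simp add: mult_le_0_iff)
qed (use assms(3) in simp)

lemma strongly_convex_tilted_minimizers_dist:
  fixes f :: "'a::real_inner \<Rightarrow> real"
  assumes "strongly_convex \<alpha> f" "convex C" "u \<in> C" "w \<in> C"
    and "\<forall>z\<in>C. f u - v \<bullet> u \<le> f z - v \<bullet> z" "\<forall>z\<in>C. f w - v' \<bullet> w \<le> f z - v' \<bullet> z"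
  shows "\<alpha> * norm (u - w) \<le> norm (v - v')"
proof -
  have "f u - v \<bullet> u + \<alpha> / 2 * (norm (w - u))\<^sup>2 \<le> f w - v \<bullet> w"
    and "f w - v' \<bullet> w + \<alpha> / 2 * (norm (u - w))\<^sup>2 \<le> f u - v' \<bullet> u"
    using strongly_convex_min_growth[OF strongly_convex_minus_linear[OF assms(1)] assms(2)] assms(3-6)
    by blast+
  then have "\<alpha> * (norm (u - w))\<^sup>2 \<le> (v - v') \<bullet> (u - w)"
    by (simp add: norm_minus_commute inner_diff_left inner_diff_right algebra_simps)
  also have "\<dots> \<le> norm (v - v') * norm (u - w)"
    by (rule norm_cauchy_schwarz)
  finally show ?thesis
    by (cases "u = w") (simp_all add: power2_eq_square)
qed

lemma strongly_convex_tilt_stable: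
  fixes f :: "'a::euclidean_space \<Rightarrow> real"
  assumes cont: "continuous_on UNIV f" and sc: "strongly_convex \<alpha> f" and "0 < \<alpha>"
    and min: "\<forall>z. f xb \<le> f z"
  shows "tilt_stable f xb"
proof -
  let ?C = "cball xb 1"
  have cont_tilted: "continuous_on ?C (\<lambda>x. f x - v \<bullet> x)" for v
    by (intro continuous_intros continuous_on_subset[OF cont]) simp
  have "\<exists>x\<in>?C. \<forall>z\<in>?C. f x - v \<bullet> x \<le> f z - v \<bullet> z" for v
    using continuous_attains_inf[OF compact_cball _ cont_tilted[of v]] by simp
  then obtain m where m_in: "\<And>v. m v \<in> ?C"
    and m_min: "\<And>v z. z \<in> ?C \<Longrightarrow> f (m v) - v \<bullet> m v \<le> f z - v \<bullet> z"
    by metis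
  have growth: "f (m v) - v \<bullet> m v + \<alpha> / 2 * (norm (z - m v))\<^sup>2 \<le> f z - v \<bullet> z" if "z \<in> ?C" for v z
    using strongly_convex_min_growth[OF strongly_convex_minus_linear[OF sc] convex_cball m_in]
      m_min that by blast
  have argmin: "{x \<in> ?C. \<forall>z\<in>?C. f x - v \<bullet> x \<le> f z - v \<bullet> z} = {m v}" for v
  proof (intro set_eqI iffI)
    fix x
    assume "x \<in> {x \<in> ?C. \<forall>z\<in>?C. f x - v \<bullet> x \<le> f z - v \<bullet> z}"
    then have "\<alpha> / 2 * (norm (x - m v))\<^sup>2 \<le> 0"
      using growth[of x v] m_in[of v] by force
    then show "x \<in> {m v}"
      using \<open>0 < \<alpha>\<close> by (simp add: mult_le_0_iff)
  qed (use m_in m_min in auto)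
  have "xb \<in> {x \<in> ?C. \<forall>z\<in>?C. f x - 0 \<bullet> x \<le> f z - 0 \<bullet> z}"
    using min by simp
  then have "m 0 = xb"
    unfolding argmin by simp
  moreover have "(1 / \<alpha>)-lipschitz_on (ball 0 1) m"
  proof (rule lipschitz_onI)
    fix v w :: 'a
    have "\<alpha> * norm (m v - m w) \<le> norm (v - w)"
      using strongly_convex_tilted_minimizers_dist[OF sc convex_cball m_in m_in] m_min by blast
    then show "dist (m v) (m w) \<le> 1 / \<alpha> * dist v w"
      using \<open>0 < \<alpha>\<close> by (simp add: dist_norm field_simps)
  qed (use \<open>0 < \<alpha>\<close> in simp)
  ultimately show ?thesis
    unfolding tilt_stable_def using argmin
    by (intro exI[of _ 1] exI[of _ "1 / \<alpha>"] exI[of _ m] conjI zero_less_one) auto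
qed

section \<open>The Lasso problem\<close>

lemma lasso_eq_quadratic:
  "lasso A b \<mu> x
    = 1/2 * ((lasso_Abar A *v x) \<bullet> x) + lasso_bbar A b \<bullet> x + 1/2 * (norm b)\<^sup>2 + lasso_g \<mu> x"
proof -
  have "(norm (A *v x - b))\<^sup>2 = (A *v x) \<bullet> (A *v x) - 2 * (b \<bullet> (A *v x)) + (norm b)\<^sup>2"
    by (simp add: power2_norm_eq_inner inner_diff_left inner_diff_right
        inner_commute[of "A *v x" b])
  moreover have "lasso_bbar A b \<bullet> x = - (b \<bullet> (A *v x))"
    by (simp add: lasso_bbar_def dot_lmul_matrix)
  ultimately show ?thesis
    by (simp add: lasso_def lasso_g_def inner_lasso_Abar)
qed

lemma lasso_minimizer_if_stationary:
  assumes "(x, \<xi>) \<in> l1_graph \<mu>" "lasso_Abar A *v x + lasso_bbar A b + \<xi> = 0"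
  shows "lasso A b \<mu> x \<le> lasso A b \<mu> z"
proof -
  have "(lasso_Abar A *v x) \<bullet> (z - x) \<le> 1/2 * ((lasso_Abar A *v z) \<bullet> z - (lasso_Abar A *v x) \<bullet> x)"
  proof -
    have "0 \<le> (A *v (z - x)) \<bullet> (A *v (z - x))"
      by simp
    then show ?thesis
      by (simp add: inner_lasso_Abar matrix_vector_mult_diff_distrib inner_diff_left
          inner_diff_right inner_commute[of "A *v z" "A *v x"] algebra_simps)
  qed
  moreover have "\<xi> \<bullet> (z - x) \<le> lasso_g \<mu> z - lasso_g \<mu> x"
    using lasso_g_subgradient_ineq[OF assms(1), of z] by simp
  moreover have "(lasso_Abar A *v x + lasso_bbar A b + \<xi>) \<bullet> (z - x) = 0"
    using assms(2) by simp
  ultimately show ?thesis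
    unfolding lasso_eq_quadratic by (simp add: inner_add_left inner_diff_right algebra_simps)
qed

lemma norm_convex_combination_sq:
  fixes p q :: "'a::real_inner"
  shows "(norm ((1 - t) *\<^sub>R p + t *\<^sub>R q))\<^sup>2
    = (1 - t) * (norm p)\<^sup>2 + t * (norm q)\<^sup>2 - t * (1 - t) * (norm (q - p))\<^sup>2"
  by (simp add: power2_norm_eq_inner inner_add_left inner_add_right inner_diff_left inner_diff_right
      inner_commute[of q p] algebra_simps)

lemma lasso_g_convex_combination:
  assumes "0 \<le> t" "t \<le> 1" "0 \<le> \<mu>"
  shows "lasso_g \<mu> ((1 - t) *\<^sub>R x + t *\<^sub>R y) \<le> (1 - t) * lasso_g \<mu> x + t * lasso_g \<mu> y"
proof -
  have "\<mu> * \<bar>(1 - t) * x$i + t * y$i\<bar> \<le> (1 - t) * (\<mu> * \<bar>x$i\<bar>) + t * (\<mu> * \<bar>y$i\<bar>)" for i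
  proof -
    have "\<bar>(1 - t) * x$i + t * y$i\<bar> \<le> (1 - t) * \<bar>x$i\<bar> + t * \<bar>y$i\<bar>"
      using abs_triangle_ineq[of "(1 - t) * x$i" "t * y$i"] assms by (simp add: abs_mult)
    then show ?thesis
      using mult_left_mono[OF _ assms(3)] by (fastforce simp: algebra_simps)
  qed
  then show ?thesis
    by (simp add: lasso_g_eq_sum sum_distrib_left sum.distrib[symmetric] sum_mono)
qed

lemma lasso_convex_combination:
  assumes "0 \<le> t" "t \<le> 1" "0 \<le> \<mu>"
  shows "lasso A b \<mu> ((1 - t) *\<^sub>R x + t *\<^sub>R y)
    \<le> (1 - t) * lasso A b \<mu> x + t * lasso A b \<mu> y - 1/2 * (t * (1 - t) * (norm (A *v (y - x)))\<^sup>2)"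
proof -
  let ?z = "(1 - t) *\<^sub>R x + t *\<^sub>R y"
  have "A *v ?z - b = (1 - t) *\<^sub>R (A *v x - b) + t *\<^sub>R (A *v y - b)"
    by (simp add: matrix_vector_right_distrib matrix_vector_mult_scaleR algebra_simps)
  then have "lasso A b \<mu> ?z = 1/2 * ((1 - t) * (norm (A *v x - b))\<^sup>2 + t * (norm (A *v y - b))\<^sup>2
      - t * (1 - t) * (norm (A *v (y - x)))\<^sup>2) + lasso_g \<mu> ?z"
    by (simp add: lasso_def lasso_g_def norm_convex_combination_sq matrix_vector_mult_diff_distrib)
  also have "\<dots> \<le> 1/2 * ((1 - t) * (norm (A *v x - b))\<^sup>2 + t * (norm (A *v y - b))\<^sup>2
      - t * (1 - t) * (norm (A *v (y - x)))\<^sup>2) + ((1 - t) * lasso_g \<mu> x + t * lasso_g \<mu> y)"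
    using lasso_g_convex_combination[OF assms] by simp
  also have "\<dots> = (1 - t) * lasso A b \<mu> x + t * lasso A b \<mu> y
      - 1/2 * (t * (1 - t) * (norm (A *v (y - x)))\<^sup>2)"
    by (simp add: lasso_def lasso_g_def field_simps)
  finally show ?thesis .
qed

lemma lasso_strongly_convex:
  assumes "pos_def (transpose A ** A)" "0 \<le> \<mu>"
  shows "\<exists>\<alpha>>0. strongly_convex \<alpha> (lasso A b \<mu>)"
proof -
  have "0 < (lasso_Abar A *v x) \<bullet> x" if "x \<noteq> 0" for x
    using assms(1) that unfolding pos_def_def lasso_Abar_def by (simp add: inner_commute)
  then obtain \<alpha> where "0 < \<alpha>" and \<alpha>: "\<And>w. \<alpha> * (norm w)\<^sup>2 \<le> (norm (A *v w))\<^sup>2"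
    using quadratic_form_lower_bound by (metis inner_lasso_Abar power2_norm_eq_inner)
  have "strongly_convex \<alpha> (lasso A b \<mu>)"
    unfolding strongly_convex_def
  proof (intro allI impI)
    fix x y :: "real^'a" and t :: real
    assume t: "0 \<le> t" "t \<le> 1"
    have "t * (1 - t) * (\<alpha> * (norm (y - x))\<^sup>2) \<le> t * (1 - t) * (norm (A *v (y - x)))\<^sup>2"
      using \<alpha> t by (intro mult_left_mono) auto
    moreover have "\<alpha> / 2 * t * (1 - t) * (norm (y - x))\<^sup>2 = 1/2 * (t * (1 - t) * (\<alpha> * (norm (y - x))\<^sup>2))"
      by simp
    ultimately show "lasso A b \<mu> ((1 - t) *\<^sub>R x + t *\<^sub>R y) \<le> (1 - t) * lasso A b \<mu> x + t * lasso A b \<mu> y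
        - \<alpha> / 2 * t * (1 - t) * (norm (y - x))\<^sup>2"
      using lasso_convex_combination[OF t assms(2), of A b x y] by linarith
  qed
  then show ?thesis
    using \<open>0 < \<alpha>\<close> by blast
qed

lemma continuous_on_lasso: "continuous_on UNIV (lasso A b \<mu>)"
  unfolding lasso_def l1norm_def
  by (intro continuous_intros linear_continuous_on matrix_vector_mul_linear)

theorem theorem6p2:
  fixes A :: "real^'n^'m" and b :: "real^'m" and \<mu> \<gamma> \<sigma> \<beta> :: real
  assumes "\<mu> > 0"
    and "pos_def (transpose A ** A)"
    and "0 < \<sigma>" and "\<sigma> < 1/2" and "0 < \<beta>" and "\<beta> < 1"
    and "\<gamma> > 0" and "pos_def (mat 1 - \<gamma> *\<^sub>R lasso_Abar A)"
  shows "gdna_well_defined (lasso_Abar A) (lasso_bbar A b) (lasso_g \<mu>) \<gamma> \<sigma> \<beta> \<and>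
    (\<forall>y d. gdna_run (lasso_Abar A) (lasso_bbar A b) (lasso_g \<mu>) \<gamma> \<sigma> \<beta> y d \<longrightarrow>
      (\<exists>yb. y \<longlonglongrightarrow> yb \<and> q_superlinear y yb \<and>
        (let xb = gdna_Q (lasso_Abar A) \<gamma> *v yb + gdna_c (lasso_Abar A) (lasso_bbar A b) \<gamma> in
          {x. \<forall>z. lasso A b \<mu> x \<le> lasso A b \<mu> z} = {xb} \<and>
          tilt_stable (lasso A b \<mu>) xb)))"
proof -
  obtain \<kappa> where "0 < \<kappa>" "\<And>x. \<kappa> * (norm x)\<^sup>2 \<le> (gdna_P (lasso_Abar A) \<gamma> *v x) \<bullet> x"
    using quadratic_form_lower_bound lasso_gdna_P_pos[OF assms(2,8,7)] by metis
  moreover obtain K where "\<And>x. norm (gdna_Q (lasso_Abar A) \<gamma> *v x) \<le> K * norm x"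
    using matrix_vector_mul_bounded_linear bounded_linear.bounded by (metis mult.commute)
  ultimately interpret gdna_l1 "lasso_Abar A" "lasso_bbar A b" \<mu> \<gamma> \<kappa> K
    using assms by unfold_locales (auto simp: lasso_Abar_def matrix_transpose_mul)
  obtain \<alpha> where "0 < \<alpha>" and sc: "strongly_convex \<alpha> (lasso A b \<mu>)"
    using lasso_strongly_convex[OF assms(2) less_imp_le[OF assms(1)]] by blast
  have "\<exists>yb. y \<longlonglongrightarrow> yb \<and> q_superlinear y yb \<and>
      {x. \<forall>z. lasso A b \<mu> x \<le> lasso A b \<mu> z} = {Q *v yb + c} \<and>
      tilt_stable (lasso A b \<mu>) (Q *v yb + c)"
    if run: "run \<sigma> \<beta> y d" for y d
  proof -
    obtain yb where yb: "y \<longlonglongrightarrow> yb" "q_superlinear y yb" "F yb = 0"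
      using run_q_superlinear[OF run] assms(3-6) by blast
    then have "\<forall>z. lasso A b \<mu> (Q *v yb + c) \<le> lasso A b \<mu> z"
      using grad_zero_imp_stationary lasso_minimizer_if_stationary by blast
    then show ?thesis
      using yb strongly_convex_argmin[OF sc \<open>0 < \<alpha>\<close>]
        strongly_convex_tilt_stable[OF continuous_on_lasso sc \<open>0 < \<alpha>\<close>] by blast
  qed
  then show ?thesis
    using well_defined assms(4-6) by (simp add: Let_def)
qed

end
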